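(* Let $\alpha\in(0,1]$ and $T\in\mathcal{B}_1(\mathbb{D})$. If there exists a Hermitian holomorphic line bundle $\mathcal{E}$ over $\mathbb{D}$ such that $\mathcal{E}_T$ is unitarily equivalent to $\mathcal{E}_{D_\alpha^*}\otimes\mathcal{E}$, then $T$ is similar to $D_\alpha^*$ if and only if $\mathcal{E}_{D_\alpha^*}\otimes\mathcal{E}$ is similar to $\mathcal{E}_{D_\alpha^*}$.
   Context: $\mathcal{B}_1(\mathbb{D})$ is the rank-one Cowen–Douglas class on the unit disk $\mathbb{D}$, with eigenvector line bundle $\mathcal{E}_T$ of fibres $\ker(T-w)$. $\mathcal{D}_\alpha$ is the weighted Dirichlet space of holomorphic $f=\sum\hat f(n)z^n$ with $\|f\|^2=\sum(n+1)^\alpha|\hat f(n)|^2$, $D_\alpha^*$ the adjoint of multiplication by $z$, and $\mathcal{E}_{D_\alpha^*}$ its eigenvector bundle. Tensor product of bundles has fibres $\mathcal{E}_1(w)\otimes\mathcal{E}_2(w)$. Unitary equivalence (resp. similarity) of bundles $\mathcal{E},\mathcal{F}$ means a unitary (resp. bounded invertible) operator $X$ between the closed spans of their fibres with $X(\mathcal{F}(w))=\mathcal{E}(w)$ for all $w$. *)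

theory Defs
  imports "HOL-Analysis.Analysis"
begin

text \<open>All Hilbert spaces are realised as weighted l2 spaces over a countable index type:
  vectors are functions i => complex, inner product sum of beta(i) f(i) conj(g(i)).\<close>

definition wl2 :: "('i \<Rightarrow> real) \<Rightarrow> ('i \<Rightarrow> complex) set" where
  "wl2 \<beta> = {f. (\<lambda>i. \<beta> i * (cmod (f i))\<^sup>2) summable_on UNIV}"

definition winner :: "('i \<Rightarrow> real) \<Rightarrow> ('i \<Rightarrow> complex) \<Rightarrow> ('i \<Rightarrow> complex) \<Rightarrow> complex" where
  "winner \<beta> f g = (\<Sum>\<^sub>\<infinity>i. complex_of_real (\<beta> i) * f i * cnj (g i))"

definition wnorm :: "('i \<Rightarrow> real) \<Rightarrow> ('i \<Rightarrow> complex) \<Rightarrow> real" where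
  "wnorm \<beta> f = sqrt (\<Sum>\<^sub>\<infinity>i. \<beta> i * (cmod (f i))\<^sup>2)"

definition ones :: "'i \<Rightarrow> real" where
  "ones = (\<lambda>_. 1)"

definition cspan :: "('i \<Rightarrow> complex) set \<Rightarrow> ('i \<Rightarrow> complex) set" where
  "cspan S = {x. \<exists>F c. finite F \<and> F \<subseteq> S \<and> x = (\<lambda>i. \<Sum>v\<in>F. c v * v i)}"

definition closed_span :: "('i \<Rightarrow> real) \<Rightarrow> ('i \<Rightarrow> complex) set \<Rightarrow> ('i \<Rightarrow> complex) set" where
  "closed_span \<beta> S = {x \<in> wl2 \<beta>. \<forall>e>0. \<exists>y\<in>cspan S. wnorm \<beta> (\<lambda>i. x i - y i) < e}"

definition clinear_on :: "('i \<Rightarrow> complex) set \<Rightarrow> (('i \<Rightarrow> complex) \<Rightarrow> ('j \<Rightarrow> complex)) \<Rightarrow> bool" where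
  "clinear_on M X \<longleftrightarrow> (\<forall>x\<in>M. \<forall>y\<in>M. \<forall>a b. X (\<lambda>i. a * x i + b * y i) = (\<lambda>j. a * X x j + b * X y j))"

definition bounded_op_between ::
  "('i \<Rightarrow> real) \<Rightarrow> ('i \<Rightarrow> complex) set \<Rightarrow> ('j \<Rightarrow> real) \<Rightarrow> ('j \<Rightarrow> complex) set
    \<Rightarrow> (('i \<Rightarrow> complex) \<Rightarrow> ('j \<Rightarrow> complex)) \<Rightarrow> bool" where
  "bounded_op_between \<beta>1 M \<beta>2 N X \<longleftrightarrow>
     clinear_on M X \<and> X ` M \<subseteq> N \<and> (\<exists>C. \<forall>x\<in>M. wnorm \<beta>2 (X x) \<le> C * wnorm \<beta>1 x)"

definition invertible_op_between ::
  "('i \<Rightarrow> real) \<Rightarrow> ('i \<Rightarrow> complex) set \<Rightarrow> ('j \<Rightarrow> real) \<Rightarrow> ('j \<Rightarrow> complex) set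
    \<Rightarrow> (('i \<Rightarrow> complex) \<Rightarrow> ('j \<Rightarrow> complex)) \<Rightarrow> bool" where
  "invertible_op_between \<beta>1 M \<beta>2 N X \<longleftrightarrow>
     bounded_op_between \<beta>1 M \<beta>2 N X \<and> bij_betw X M N \<and>
     (\<exists>C. \<forall>x\<in>M. wnorm \<beta>1 x \<le> C * wnorm \<beta>2 (X x))"

definition unitary_between ::
  "('i \<Rightarrow> real) \<Rightarrow> ('i \<Rightarrow> complex) set \<Rightarrow> ('j \<Rightarrow> real) \<Rightarrow> ('j \<Rightarrow> complex) set
    \<Rightarrow> (('i \<Rightarrow> complex) \<Rightarrow> ('j \<Rightarrow> complex)) \<Rightarrow> bool" where
  "unitary_between \<beta>1 M \<beta>2 N X \<longleftrightarrow>
     clinear_on M X \<and> bij_betw X M N \<and> (\<forall>x\<in>M. \<forall>y\<in>M. winner \<beta>2 (X x) (X y) = winner \<beta>1 x y)"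

definition bounded_operator :: "('i \<Rightarrow> real) \<Rightarrow> (('i \<Rightarrow> complex) \<Rightarrow> ('i \<Rightarrow> complex)) \<Rightarrow> bool" where
  "bounded_operator \<beta> T \<longleftrightarrow> bounded_op_between \<beta> (wl2 \<beta>) \<beta> (wl2 \<beta>) T"

definition op_similar ::
  "('i \<Rightarrow> real) \<Rightarrow> (('i \<Rightarrow> complex) \<Rightarrow> ('i \<Rightarrow> complex))
    \<Rightarrow> ('j \<Rightarrow> real) \<Rightarrow> (('j \<Rightarrow> complex) \<Rightarrow> ('j \<Rightarrow> complex)) \<Rightarrow> bool" where
  "op_similar \<beta>1 T \<beta>2 S \<longleftrightarrow>
     (\<exists>X. invertible_op_between \<beta>2 (wl2 \<beta>2) \<beta>1 (wl2 \<beta>1) X \<and> (\<forall>x\<in>wl2 \<beta>2. X (S x) = T (X x)))"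

definition bundle_span :: "('i \<Rightarrow> real) \<Rightarrow> (complex \<Rightarrow> ('i \<Rightarrow> complex) set) \<Rightarrow> ('i \<Rightarrow> complex) set" where
  "bundle_span \<beta> E = closed_span \<beta> (\<Union>w\<in>ball 0 1. E w)"

definition eig_bundle :: "('i \<Rightarrow> real) \<Rightarrow> (('i \<Rightarrow> complex) \<Rightarrow> ('i \<Rightarrow> complex)) \<Rightarrow> complex \<Rightarrow> ('i \<Rightarrow> complex) set" where
  "eig_bundle \<beta> T w = {x \<in> wl2 \<beta>. T x = (\<lambda>i. w * x i)}"

definition bundle_unitary_equiv ::
  "('i \<Rightarrow> real) \<Rightarrow> (complex \<Rightarrow> ('i \<Rightarrow> complex) set) \<Rightarrow> ('j \<Rightarrow> real) \<Rightarrow> (complex \<Rightarrow> ('j \<Rightarrow> complex) set) \<Rightarrow> bool" where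
  "bundle_unitary_equiv \<beta>E E \<beta>F F \<longleftrightarrow>
     (\<exists>X. unitary_between \<beta>F (bundle_span \<beta>F F) \<beta>E (bundle_span \<beta>E E) X \<and> (\<forall>w\<in>ball 0 1. X ` F w = E w))"

definition bundle_similar ::
  "('i \<Rightarrow> real) \<Rightarrow> (complex \<Rightarrow> ('i \<Rightarrow> complex) set) \<Rightarrow> ('j \<Rightarrow> real) \<Rightarrow> (complex \<Rightarrow> ('j \<Rightarrow> complex) set) \<Rightarrow> bool" where
  "bundle_similar \<beta>E E \<beta>F F \<longleftrightarrow>
     (\<exists>X. invertible_op_between \<beta>F (bundle_span \<beta>F F) \<beta>E (bundle_span \<beta>E E) X \<and> (\<forall>w\<in>ball 0 1. X ` F w = E w))"

definition cowen_douglas_1 :: "('i \<Rightarrow> real) \<Rightarrow> (('i \<Rightarrow> complex) \<Rightarrow> ('i \<Rightarrow> complex)) \<Rightarrow> bool" where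
  "cowen_douglas_1 \<beta> T \<longleftrightarrow>
     bounded_operator \<beta> T \<and>
     (\<forall>w\<in>ball 0 1.
        (\<forall>y\<in>wl2 \<beta>. \<exists>x\<in>wl2 \<beta>. (\<lambda>i. T x i - w * x i) = y) \<and>
        (\<exists>e. e \<noteq> (\<lambda>_. 0) \<and> eig_bundle \<beta> T w = cspan {e})) \<and>
     bundle_span \<beta> (eig_bundle \<beta> T) = wl2 \<beta>"

definition dir_weight :: "real \<Rightarrow> nat \<Rightarrow> real" where
  "dir_weight \<alpha> n = (real n + 1) powr \<alpha>"

text \<open>Multiplication by z on Taylor coefficients.\<close>
definition shift_z :: "(nat \<Rightarrow> complex) \<Rightarrow> (nat \<Rightarrow> complex)" where
  "shift_z f = (\<lambda>n. if n = 0 then 0 else f (n - 1))"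

text \<open>The adjoint of M_z on D_alpha (set to 0 outside the space for uniqueness).\<close>
definition Dstar :: "real \<Rightarrow> (nat \<Rightarrow> complex) \<Rightarrow> (nat \<Rightarrow> complex)" where
  "Dstar \<alpha> = (THE A. (\<forall>g\<in>wl2 (dir_weight \<alpha>). A g \<in> wl2 (dir_weight \<alpha>)) \<and>
      (\<forall>f\<in>wl2 (dir_weight \<alpha>). \<forall>g\<in>wl2 (dir_weight \<alpha>).
          winner (dir_weight \<alpha>) (shift_z f) g = winner (dir_weight \<alpha>) f (A g)) \<and>
      (\<forall>g. g \<notin> wl2 (dir_weight \<alpha>) \<longrightarrow> A g = (\<lambda>_. 0)))"

text \<open>A holomorphic nonvanishing frame gamma of a line bundle realised in wl2 beta
  (Hermitian metric induced by the inner product).\<close>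
definition hol_frame :: "('i \<Rightarrow> real) \<Rightarrow> (complex \<Rightarrow> ('i \<Rightarrow> complex)) \<Rightarrow> bool" where
  "hol_frame \<beta> \<gamma> \<longleftrightarrow>
     (\<forall>w\<in>ball 0 1. \<gamma> w \<in> wl2 \<beta> \<and> \<gamma> w \<noteq> (\<lambda>_. 0) \<and>
        (\<exists>g\<in>wl2 \<beta>. ((\<lambda>h. wnorm \<beta> (\<lambda>i. (\<gamma> (w + h) i - \<gamma> w i) / h - g i)) \<longlongrightarrow> 0) (at 0)))"

definition line_bundle_of :: "(complex \<Rightarrow> ('i \<Rightarrow> complex)) \<Rightarrow> complex \<Rightarrow> ('i \<Rightarrow> complex) set" where
  "line_bundle_of \<gamma> w = cspan {\<gamma> w}"

text \<open>Hilbert tensor product wl2 b1 (x) wl2 b2 = wl2 (b1 (x) b2) on the product index set.\<close>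
definition tens :: "('i \<Rightarrow> complex) \<Rightarrow> ('j \<Rightarrow> complex) \<Rightarrow> ('i \<times> 'j \<Rightarrow> complex)" where
  "tens x y = (\<lambda>(i, j). x i * y j)"

definition tensor_weight :: "('i \<Rightarrow> real) \<Rightarrow> ('j \<Rightarrow> real) \<Rightarrow> ('i \<times> 'j \<Rightarrow> real)" where
  "tensor_weight \<beta>1 \<beta>2 = (\<lambda>(i, j). \<beta>1 i * \<beta>2 j)"

definition tensor_bundle ::
  "(complex \<Rightarrow> ('i \<Rightarrow> complex) set) \<Rightarrow> (complex \<Rightarrow> ('j \<Rightarrow> complex) set) \<Rightarrow> complex \<Rightarrow> ('i \<times> 'j \<Rightarrow> complex) set" where
  "tensor_bundle E F w = cspan {tens x y | x y. x \<in> E w \<and> y \<in> F w}"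

end

theory Submission
  imports Defs
begin

text \<open>
  Both similarity statements reduce to similarity of eigenvector bundles. When the eigenvectors
  of two bounded operators \<open>S\<close>, \<open>T\<close> span their spaces, an invertible \<open>X\<close> mapping eigenvectors
  of \<open>S\<close> onto those of \<open>T\<close> fibrewise already satisfies \<open>X S = T X\<close>: both sides are bounded
  and agree on every eigenvector. Conversely an intertwiner maps eigenvectors to eigenvectors.
  This applies to \<open>T\<close> by the Cowen--Douglas hypothesis, and to \<open>D\<^sub>\<alpha>\<^sup>*\<close>, whose eigenvectors
  \<open>w\<^sup>n / (n + 1)\<^sup>\<alpha>\<close> span \<open>D\<^sub>\<alpha>\<close> because every coefficient vector is a limit of divided
  differences of them at \<open>w = 0\<close>. Finally, bundle similarity is transitive and contains
  unitary equivalence, so with \<open>E_D\<close> the eigenvector bundle of \<open>D\<^sub>\<alpha>\<^sup>*\<close> the hypothesis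
  \<open>E_T \<cong> E_D \<otimes> E\<close> turns similarity of \<open>E_T\<close> and \<open>E_D\<close> into similarity of \<open>E_D \<otimes> E\<close>
  and \<open>E_D\<close>.
\<close>

lemma wl2_zero: "(\<lambda>_. 0) \<in> wl2 \<beta>"
  by (simp add: wl2_def)

lemma wl2_lincomb:
  assumes \<beta>: "\<And>i. 0 \<le> \<beta> i" and x: "x \<in> wl2 \<beta>" and y: "y \<in> wl2 \<beta>"
  shows "(\<lambda>i. a * x i + b * y i) \<in> wl2 \<beta>"
  unfolding wl2_def mem_Collect_eq
proof (rule summable_on_comparison_test)
  show "(\<lambda>i. 2 * (cmod a)\<^sup>2 * (\<beta> i * (cmod (x i))\<^sup>2) + 2 * (cmod b)\<^sup>2 * (\<beta> i * (cmod (y i))\<^sup>2))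
      summable_on UNIV"
    using x y by (intro summable_on_add summable_on_cmult_right) (auto simp: wl2_def)
  fix i
  have "(cmod (a * x i + b * y i))\<^sup>2 \<le> (cmod (a * x i) + cmod (b * y i))\<^sup>2"
    by (intro power_mono norm_triangle_ineq) simp
  also have "\<dots> \<le> 2 * (cmod (a * x i))\<^sup>2 + 2 * (cmod (b * y i))\<^sup>2"
    by (smt (verit) sum_squares_bound power2_sum)
  finally have "\<beta> i * (cmod (a * x i + b * y i))\<^sup>2
      \<le> \<beta> i * (2 * (cmod (a * x i))\<^sup>2 + 2 * (cmod (b * y i))\<^sup>2)"
    using \<beta>[of i] by (rule mult_left_mono)
  then show "\<beta> i * (cmod (a * x i + b * y i))\<^sup>2
      \<le> 2 * (cmod a)\<^sup>2 * (\<beta> i * (cmod (x i))\<^sup>2) + 2 * (cmod b)\<^sup>2 * (\<beta> i * (cmod (y i))\<^sup>2)"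
    by (simp add: norm_mult power_mult_distrib algebra_simps)
qed (use \<beta> in simp)

lemma wl2_scale: "(\<And>i. 0 \<le> \<beta> i) \<Longrightarrow> x \<in> wl2 \<beta> \<Longrightarrow> (\<lambda>i. a * x i) \<in> wl2 \<beta>"
  using wl2_lincomb[of \<beta> x x a 0] by simp

lemma wl2_diff: "(\<And>i. 0 \<le> \<beta> i) \<Longrightarrow> x \<in> wl2 \<beta> \<Longrightarrow> y \<in> wl2 \<beta> \<Longrightarrow> (\<lambda>i. x i - y i) \<in> wl2 \<beta>"
  using wl2_lincomb[of \<beta> x y 1 "-1"] by simp

lemma wnorm_nonneg: "(\<And>i. 0 \<le> \<beta> i) \<Longrightarrow> 0 \<le> wnorm \<beta> x"
  unfolding wnorm_def by (intro real_sqrt_ge_zero infsum_nonneg) auto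

lemma wnorm_zero [simp]: "wnorm \<beta> (\<lambda>_. 0) = 0"
  by (simp add: wnorm_def)

lemma wnorm_scale: "wnorm \<beta> (\<lambda>i. c * x i) = cmod c * wnorm \<beta> x"
proof -
  have "(\<Sum>\<^sub>\<infinity>i. \<beta> i * (cmod (c * x i))\<^sup>2) = (cmod c)\<^sup>2 * (\<Sum>\<^sub>\<infinity>i. \<beta> i * (cmod (x i))\<^sup>2)"
    by (simp add: norm_mult power_mult_distrib algebra_simps flip: infsum_cmult_right')
  then show ?thesis
    unfolding wnorm_def by (simp add: real_sqrt_mult)
qed

lemma wnorm_minus_commute: "wnorm \<beta> (\<lambda>i. x i - y i) = wnorm \<beta> (\<lambda>i. y i - x i)"
  unfolding wnorm_def by (simp add: norm_minus_commute)

lemma L2_set_le_wnorm: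
  assumes \<beta>: "\<And>i. 0 \<le> \<beta> i" and x: "x \<in> wl2 \<beta>" and F: "finite F"
  shows "L2_set (\<lambda>i. sqrt (\<beta> i) * cmod (x i)) F \<le> wnorm \<beta> x"
proof -
  have "L2_set (\<lambda>i. sqrt (\<beta> i) * cmod (x i)) F = sqrt (\<Sum>i\<in>F. \<beta> i * (cmod (x i))\<^sup>2)"
    unfolding L2_set_def using \<beta> by (simp add: power_mult_distrib)
  also have "\<dots> \<le> wnorm \<beta> x"
    unfolding wnorm_def using x F \<beta>
    by (intro real_sqrt_le_mono finite_sum_le_infsum) (auto simp: wl2_def)
  finally show ?thesis .
qed

text \<open>Minkowski's inequality, reduced to \<open>L2_set_triangle_ineq\<close> on finite sets of indices.\<close>
lemma wnorm_triangle:
  assumes \<beta>: "\<And>i. 0 \<le> \<beta> i" and x: "x \<in> wl2 \<beta>" and y: "y \<in> wl2 \<beta>"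
  shows "wnorm \<beta> (\<lambda>i. x i + y i) \<le> wnorm \<beta> x + wnorm \<beta> y"
proof -
  let ?n = "\<lambda>x i. sqrt (\<beta> i) * cmod (x i)"
  have "(\<Sum>i\<in>F. \<beta> i * (cmod (x i + y i))\<^sup>2) \<le> (wnorm \<beta> x + wnorm \<beta> y)\<^sup>2" if F: "finite F" for F
  proof -
    have "L2_set (?n (\<lambda>i. x i + y i)) F \<le> L2_set (\<lambda>i. ?n x i + ?n y i) F"
      using \<beta> by (intro L2_set_mono) (auto simp: distrib_left[symmetric] mult_left_mono norm_triangle_ineq)
    also have "\<dots> \<le> L2_set (?n x) F + L2_set (?n y) F"
      by (rule L2_set_triangle_ineq)
    also have "\<dots> \<le> wnorm \<beta> x + wnorm \<beta> y"
      using L2_set_le_wnorm[OF \<beta> _ F] x y by (intro add_mono) auto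
    finally have "sqrt (\<Sum>i\<in>F. \<beta> i * (cmod (x i + y i))\<^sup>2) \<le> wnorm \<beta> x + wnorm \<beta> y"
      unfolding L2_set_def using \<beta> by (simp add: power_mult_distrib)
    then show ?thesis
      by (rule sqrt_le_D)
  qed
  then have "(\<Sum>\<^sub>\<infinity>i. \<beta> i * (cmod (x i + y i))\<^sup>2) \<le> (wnorm \<beta> x + wnorm \<beta> y)\<^sup>2"
    using wl2_lincomb[OF \<beta> x y, of 1 1] by (intro infsum_le_finite_sums) (auto simp: wl2_def)
  then have "sqrt (\<Sum>\<^sub>\<infinity>i. \<beta> i * (cmod (x i + y i))\<^sup>2) \<le> wnorm \<beta> x + wnorm \<beta> y"
    using wnorm_nonneg[OF \<beta>] by (intro real_le_lsqrt add_nonneg_nonneg)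
  then show ?thesis
    by (simp only: wnorm_def)
qed

lemma wnorm_diff_triangle:
  assumes \<beta>: "\<And>i. 0 \<le> \<beta> i" and "x \<in> wl2 \<beta>" "y \<in> wl2 \<beta>" "z \<in> wl2 \<beta>"
  shows "wnorm \<beta> (\<lambda>i. x i - z i) \<le> wnorm \<beta> (\<lambda>i. x i - y i) + wnorm \<beta> (\<lambda>i. y i - z i)"
  using wnorm_triangle[OF \<beta> wl2_diff[OF \<beta> assms(2,3)] wl2_diff[OF \<beta> assms(3,4)]] by simp

lemma wnorm_diff_le:
  assumes \<beta>: "\<And>i. 0 \<le> \<beta> i" and x: "x \<in> wl2 \<beta>" and y: "y \<in> wl2 \<beta>"
  shows "wnorm \<beta> (\<lambda>i. x i - y i) \<le> wnorm \<beta> x + wnorm \<beta> y"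
  using wnorm_triangle[OF \<beta> x wl2_scale[OF \<beta> y, of "-1"]] wnorm_scale[of \<beta> "-1" y] by simp

lemma wnorm_eq_0_imp_zero:
  assumes \<beta>: "\<And>i. 0 < \<beta> i" and x: "x \<in> wl2 \<beta>" and "wnorm \<beta> x = 0"
  shows "x = (\<lambda>_. 0)"
proof
  fix i
  have "(\<Sum>\<^sub>\<infinity>i. \<beta> i * (cmod (x i))\<^sup>2) \<le> 0"
    using \<open>wnorm \<beta> x = 0\<close> by (simp add: wnorm_def)
  then have "\<beta> i * (cmod (x i))\<^sup>2 = 0"
    using x \<beta> by (intro nonneg_infsum_le_0D[of _ UNIV]) (auto simp: wl2_def less_imp_le)
  then show "x i = 0"
    using \<beta>[of i] by simp
qed

lemma winner_self:
  assumes \<beta>: "\<And>i. 0 \<le> \<beta> i" and x: "x \<in> wl2 \<beta>"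
  shows "winner \<beta> x x = complex_of_real ((wnorm \<beta> x)\<^sup>2)"
proof -
  have "((\<lambda>i. \<beta> i * (cmod (x i))\<^sup>2) has_sum (wnorm \<beta> x)\<^sup>2) UNIV"
    using x \<beta> by (simp add: wnorm_def wl2_def infsum_nonneg)
  then have "((\<lambda>i. complex_of_real (\<beta> i * (cmod (x i))\<^sup>2)) has_sum complex_of_real ((wnorm \<beta> x)\<^sup>2)) UNIV"
    by (rule has_sum_of_real)
  moreover have "complex_of_real (\<beta> i) * x i * cnj (x i) = complex_of_real (\<beta> i * (cmod (x i))\<^sup>2)" for i
    by (metis complex_norm_square mult.assoc of_real_mult)
  ultimately show ?thesis
    unfolding winner_def by (simp only:) (rule infsumI)
qed

lemma cspan_superset: "v \<in> S \<Longrightarrow> v \<in> cspan S"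
  unfolding cspan_def by (intro CollectI exI[of _ "{v}"] exI[of _ "\<lambda>_. 1"]) auto

lemma cspan_minimal:
  assumes zero: "(\<lambda>_. 0) \<in> V"
    and lincomb: "\<And>x y a b. x \<in> V \<Longrightarrow> y \<in> V \<Longrightarrow> (\<lambda>i. a * x i + b * y i) \<in> V"
    and "S \<subseteq> V"
  shows "cspan S \<subseteq> V"
proof
  fix x assume "x \<in> cspan S"
  then obtain F c where F: "finite F" "F \<subseteq> S" and x: "x = (\<lambda>i. \<Sum>v\<in>F. c v * v i)"
    unfolding cspan_def by blast
  from F have "(\<lambda>i. \<Sum>v\<in>F. c v * v i) \<in> V"
  proof (induction F rule: finite_induct)
    case (insert w F)
    then show ?case
      using lincomb[of w "\<lambda>i. \<Sum>v\<in>F. c v * v i" "c w" 1] \<open>S \<subseteq> V\<close> by auto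
  qed (simp add: zero)
  then show "x \<in> V"
    by (simp add: x)
qed

lemma cspan_lincomb:
  assumes x: "x \<in> cspan S" and y: "y \<in> cspan S"
  shows "(\<lambda>i. a * x i + b * y i) \<in> cspan S"
proof -
  obtain F1 c1 where F1: "finite F1" "F1 \<subseteq> S" and x: "x = (\<lambda>i. \<Sum>v\<in>F1. c1 v * v i)"
    using x unfolding cspan_def by blast
  obtain F2 c2 where F2: "finite F2" "F2 \<subseteq> S" and y: "y = (\<lambda>i. \<Sum>v\<in>F2. c2 v * v i)"
    using y unfolding cspan_def by blast
  define c where "c v = a * (if v \<in> F1 then c1 v else 0) + b * (if v \<in> F2 then c2 v else 0)" for v
  have restrict: "(\<Sum>v\<in>F1 \<union> F2. (if v \<in> F then d v * v i else 0)) = (\<Sum>v\<in>F. d v * v i)"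
    if "F = F1 \<or> F = F2" for F d i
    using that F1 F2 by (auto simp flip: sum.inter_restrict)
  have "c v * v i = a * (if v \<in> F1 then c1 v * v i else 0) + b * (if v \<in> F2 then c2 v * v i else 0)"
    for v i by (simp add: c_def algebra_simps)
  then have "(\<Sum>v\<in>F1 \<union> F2. c v * v i) = a * x i + b * y i" for i
    by (simp only: sum.distrib flip: sum_distrib_left) (simp add: x y restrict)
  then show ?thesis
    unfolding cspan_def using F1 F2 by (intro CollectI exI[of _ "F1 \<union> F2"] exI[of _ c]) auto
qed

lemma cspan_subset_wl2: "(\<And>i. 0 \<le> \<beta> i) \<Longrightarrow> S \<subseteq> wl2 \<beta> \<Longrightarrow> cspan S \<subseteq> wl2 \<beta>"
  by (rule cspan_minimal) (auto intro: wl2_zero wl2_lincomb)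

lemma closed_span_subset_wl2: "closed_span \<beta> S \<subseteq> wl2 \<beta>"
  unfolding closed_span_def by auto

lemma cspan_subset_closed_span:
  assumes "\<And>i. 0 \<le> \<beta> i" and "S \<subseteq> wl2 \<beta>"
  shows "cspan S \<subseteq> closed_span \<beta> S"
  using cspan_subset_wl2[OF assms] unfolding closed_span_def by force

lemma closed_span_superset:
  assumes "\<And>i. 0 \<le> \<beta> i" and "S \<subseteq> wl2 \<beta>"
  shows "S \<subseteq> closed_span \<beta> S"
  using cspan_subset_closed_span[OF assms] cspan_superset by blast

lemma closed_span_closed:
  assumes \<beta>: "\<And>i. 0 \<le> \<beta> i" and S: "S \<subseteq> wl2 \<beta>" and x: "x \<in> wl2 \<beta>"
    and approx: "\<And>e. e > 0 \<Longrightarrow> \<exists>y\<in>closed_span \<beta> S. wnorm \<beta> (\<lambda>i. x i - y i) < e"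
  shows "x \<in> closed_span \<beta> S"
  unfolding closed_span_def
proof (intro CollectI conjI x allI impI)
  fix e :: real assume "e > 0"
  then obtain y where y: "y \<in> closed_span \<beta> S" and xy: "wnorm \<beta> (\<lambda>i. x i - y i) < e/2"
    using approx[of "e/2"] by auto
  obtain z where z: "z \<in> cspan S" and yz: "wnorm \<beta> (\<lambda>i. y i - z i) < e/2"
    using y \<open>e > 0\<close> unfolding closed_span_def by (auto dest!: spec[of _ "e/2"])
  have "wnorm \<beta> (\<lambda>i. x i - z i) \<le> wnorm \<beta> (\<lambda>i. x i - y i) + wnorm \<beta> (\<lambda>i. y i - z i)"
    using y z cspan_subset_wl2[OF \<beta> S] closed_span_subset_wl2
    by (intro wnorm_diff_triangle[OF \<beta> x]) auto
  then show "\<exists>z\<in>cspan S. wnorm \<beta> (\<lambda>i. x i - z i) < e"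
    using xy yz z by force
qed

lemma closed_span_lincomb:
  assumes \<beta>: "\<And>i. 0 \<le> \<beta> i" and S: "S \<subseteq> wl2 \<beta>"
    and x: "x \<in> closed_span \<beta> S" and y: "y \<in> closed_span \<beta> S"
  shows "(\<lambda>i. a * x i + b * y i) \<in> closed_span \<beta> S"
  unfolding closed_span_def
proof (intro CollectI conjI allI impI)
  have xw: "x \<in> wl2 \<beta>" and yw: "y \<in> wl2 \<beta>"
    using x y closed_span_subset_wl2 by auto
  then show "(\<lambda>i. a * x i + b * y i) \<in> wl2 \<beta>"
    by (rule wl2_lincomb[OF \<beta>])
  fix e :: real assume "e > 0"
  define d where "d = e / (cmod a + cmod b + 1)"
  have "d > 0"
    using \<open>e > 0\<close> by (simp add: d_def add_nonneg_pos)
  obtain x' where x': "x' \<in> cspan S" and xx': "wnorm \<beta> (\<lambda>i. x i - x' i) < d"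
    using x \<open>d > 0\<close> unfolding closed_span_def by (auto dest!: spec[of _ d])
  obtain y' where y': "y' \<in> cspan S" and yy': "wnorm \<beta> (\<lambda>i. y i - y' i) < d"
    using y \<open>d > 0\<close> unfolding closed_span_def by (auto dest!: spec[of _ d])
  have x'w: "x' \<in> wl2 \<beta>" and y'w: "y' \<in> wl2 \<beta>"
    using x' y' cspan_subset_wl2[OF \<beta> S] by auto
  have "wnorm \<beta> (\<lambda>i. (a * x i + b * y i) - (a * x' i + b * y' i))
      = wnorm \<beta> (\<lambda>i. a * (x i - x' i) + b * (y i - y' i))"
    by (simp add: algebra_simps)
  also have "\<dots> \<le> wnorm \<beta> (\<lambda>i. a * (x i - x' i)) + wnorm \<beta> (\<lambda>i. b * (y i - y' i))"
    by (intro wnorm_triangle[OF \<beta>] wl2_scale[OF \<beta>] wl2_diff[OF \<beta>] xw yw x'w y'w)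
  also have "\<dots> = cmod a * wnorm \<beta> (\<lambda>i. x i - x' i) + cmod b * wnorm \<beta> (\<lambda>i. y i - y' i)"
    by (simp add: wnorm_scale)
  also have "\<dots> \<le> (cmod a + cmod b) * d"
    using xx' yy' by (simp add: distrib_right add_mono mult_left_mono)
  also have "\<dots> < (cmod a + cmod b + 1) * d"
    using \<open>d > 0\<close> by simp
  also have "\<dots> = e"
    unfolding d_def using norm_ge_zero[of a] norm_ge_zero[of b]
    by (simp add: add_nonneg_eq_0_iff add_pos_nonneg)
  finally show "\<exists>z\<in>cspan S. wnorm \<beta> (\<lambda>i. (a * x i + b * y i) - z i) < e"
    using cspan_lincomb[OF x' y'] by force
qed

lemma closed_span_sum:
  assumes \<beta>: "\<And>i. 0 \<le> \<beta> i" and S: "S \<subseteq> wl2 \<beta>" and v: "\<And>k. k < (N::nat) \<Longrightarrow> v k \<in> closed_span \<beta> S"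
  shows "(\<lambda>i. \<Sum>k<N. c k * v k i) \<in> closed_span \<beta> S"
  using v
proof (induction N)
  case 0
  have "(\<lambda>_. 0) \<in> cspan S"
    unfolding cspan_def by (intro CollectI exI[of _ "{}"]) auto
  then show ?case
    using cspan_subset_closed_span[OF \<beta> S] by auto
next
  case (Suc N)
  then have "(\<lambda>i. 1 * (\<Sum>k<N. c k * v k i) + c N * v N i) \<in> closed_span \<beta> S"
    by (intro closed_span_lincomb[OF \<beta> S]) auto
  then show ?case
    by simp
qed

lemma clinear_onD:
  "clinear_on M X \<Longrightarrow> x \<in> M \<Longrightarrow> y \<in> M \<Longrightarrow> X (\<lambda>i. a * x i + b * y i) = (\<lambda>j. a * X x j + b * X y j)"
  unfolding clinear_on_def by blast

lemma clinear_on_scale: "clinear_on M X \<Longrightarrow> x \<in> M \<Longrightarrow> X (\<lambda>i. a * x i) = (\<lambda>j. a * X x j)"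
  using clinear_onD[of M X x x a 0] by simp

lemma clinear_on_diff:
  "clinear_on M X \<Longrightarrow> x \<in> M \<Longrightarrow> y \<in> M \<Longrightarrow> X (\<lambda>i. x i - y i) = (\<lambda>j. X x j - X y j)"
  using clinear_onD[of M X x y 1 "-1"] by simp

lemma clinear_on_zero: "clinear_on M X \<Longrightarrow> x \<in> M \<Longrightarrow> X (\<lambda>_. 0) = (\<lambda>_. 0)"
  using clinear_on_scale[of M X x 0] by simp

lemma clinear_on_compose:
  assumes "clinear_on M X" and "X ` M \<subseteq> N" and "clinear_on N Y"
  shows "clinear_on M (\<lambda>x. Y (X x))"
  using assms unfolding clinear_on_def by (simp add: image_subset_iff)

lemma wnorm_bound_max_0:
  assumes "\<forall>x\<in>M. wnorm \<beta>1 (f x) \<le> C * wnorm \<beta>2 (g x)" and "\<And>j. 0 \<le> \<beta>2 j"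
  shows "\<forall>x\<in>M. wnorm \<beta>1 (f x) \<le> max C 0 * wnorm \<beta>2 (g x)"
  using assms(1) mult_right_mono[OF max.cobounded1 wnorm_nonneg[of \<beta>2, OF assms(2)]] order_trans
  by blast

lemma bounded_op_between_nonneg_bound:
  assumes "bounded_op_between \<beta>1 M \<beta>2 N X" and "\<And>i. 0 \<le> \<beta>1 i"
  obtains C where "C \<ge> 0" and "\<And>x. x \<in> M \<Longrightarrow> wnorm \<beta>2 (X x) \<le> C * wnorm \<beta>1 x"
  using assms wnorm_bound_max_0[of M \<beta>2 X _ \<beta>1 "\<lambda>x. x"] unfolding bounded_op_between_def
  by (metis max.cobounded2)

lemma bounded_op_between_compose:
  assumes X: "bounded_op_between \<beta>1 M \<beta>2 N X" and Y: "bounded_op_between \<beta>2 N \<beta>3 P Y"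
    and \<beta>1: "\<And>i. 0 \<le> \<beta>1 i" and \<beta>2: "\<And>j. 0 \<le> \<beta>2 j"
  shows "bounded_op_between \<beta>1 M \<beta>3 P (\<lambda>x. Y (X x))"
proof -
  obtain CX where "CX \<ge> 0" and CX: "\<And>x. x \<in> M \<Longrightarrow> wnorm \<beta>2 (X x) \<le> CX * wnorm \<beta>1 x"
    using bounded_op_between_nonneg_bound[OF X \<beta>1] by blast
  obtain CY where "CY \<ge> 0" and CY: "\<And>y. y \<in> N \<Longrightarrow> wnorm \<beta>3 (Y y) \<le> CY * wnorm \<beta>2 y"
    using bounded_op_between_nonneg_bound[OF Y \<beta>2] by blast
  have XM: "X ` M \<subseteq> N" and YN: "Y ` N \<subseteq> P"
    using X Y by (simp_all add: bounded_op_between_def)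
  have "wnorm \<beta>3 (Y (X x)) \<le> (CY * CX) * wnorm \<beta>1 x" if "x \<in> M" for x
  proof -
    have "wnorm \<beta>3 (Y (X x)) \<le> CY * wnorm \<beta>2 (X x)"
      using CY XM that by blast
    also have "\<dots> \<le> CY * (CX * wnorm \<beta>1 x)"
      using CX[OF that] \<open>CY \<ge> 0\<close> by (rule mult_left_mono)
    finally show ?thesis
      by (simp add: mult.assoc)
  qed
  moreover have "clinear_on M (\<lambda>x. Y (X x))"
    using clinear_on_compose[of M X N Y] X Y XM unfolding bounded_op_between_def by blast
  ultimately show ?thesis
    using XM YN unfolding bounded_op_between_def by blast
qed

lemma invertible_op_between_compose:
  assumes X: "invertible_op_between \<beta>1 M \<beta>2 N X" and Y: "invertible_op_between \<beta>2 N \<beta>3 P Y"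
    and \<beta>1: "\<And>i. 0 \<le> \<beta>1 i" and \<beta>2: "\<And>j. 0 \<le> \<beta>2 j" and \<beta>3: "\<And>k. 0 \<le> \<beta>3 k"
  shows "invertible_op_between \<beta>1 M \<beta>3 P (\<lambda>x. Y (X x))"
proof -
  obtain DX where DX: "\<forall>x\<in>M. wnorm \<beta>1 x \<le> max DX 0 * wnorm \<beta>2 (X x)"
    using X wnorm_bound_max_0[of M \<beta>1 "\<lambda>x. x" _ \<beta>2 X, OF _ \<beta>2]
    unfolding invertible_op_between_def by blast
  obtain DY where DY: "\<forall>y\<in>N. wnorm \<beta>2 y \<le> max DY 0 * wnorm \<beta>3 (Y y)"
    using Y wnorm_bound_max_0[of N \<beta>2 "\<lambda>x. x" _ \<beta>3 Y, OF _ \<beta>3]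
    unfolding invertible_op_between_def by blast
  have XM: "\<And>x. x \<in> M \<Longrightarrow> X x \<in> N"
    using X by (auto simp: invertible_op_between_def bij_betw_def)
  have "wnorm \<beta>1 x \<le> (max DX 0 * max DY 0) * wnorm \<beta>3 (Y (X x))" if "x \<in> M" for x
  proof -
    have "wnorm \<beta>1 x \<le> max DX 0 * wnorm \<beta>2 (X x)"
      using DX that by blast
    also have "\<dots> \<le> max DX 0 * (max DY 0 * wnorm \<beta>3 (Y (X x)))"
      using DY XM[OF that] by (intro mult_left_mono) auto
    finally show ?thesis
      by (simp add: mult.assoc)
  qed
  moreover have "bij_betw (\<lambda>x. Y (X x)) M P"
    using bij_betw_trans[of X M N Y P] X Y by (simp add: invertible_op_between_def o_def)
  ultimately show ?thesis
    using bounded_op_between_compose[of \<beta>1 M \<beta>2 N X \<beta>3 P Y, OF _ _ \<beta>1 \<beta>2] X Y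
    unfolding invertible_op_between_def by blast
qed

lemma clinear_on_eq_on_cspan:
  assumes \<beta>: "\<And>i. 0 \<le> \<beta> i" and A: "clinear_on (wl2 \<beta>) A" and B: "clinear_on (wl2 \<beta>) B"
    and S: "S \<subseteq> wl2 \<beta>" and eq: "\<And>v. v \<in> S \<Longrightarrow> A v = B v"
  shows "cspan S \<subseteq> {y \<in> wl2 \<beta>. A y = B y}"
proof (rule cspan_minimal)
  show "(\<lambda>_. 0) \<in> {y \<in> wl2 \<beta>. A y = B y}"
    using clinear_on_zero[OF A wl2_zero] clinear_on_zero[OF B wl2_zero] wl2_zero by simp
  show "S \<subseteq> {y \<in> wl2 \<beta>. A y = B y}"
    using S eq by blast
  fix y z a b
  assume "y \<in> {y \<in> wl2 \<beta>. A y = B y}" and "z \<in> {y \<in> wl2 \<beta>. A y = B y}"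
  then show "(\<lambda>i. a * y i + b * z i) \<in> {y \<in> wl2 \<beta>. A y = B y}"
    using wl2_lincomb[of \<beta> y z a b, OF \<beta>] by (simp add: clinear_onD[OF A] clinear_onD[OF B])
qed

text \<open>Positivity of the target weight is what makes \<open>wnorm\<close> definite: \<open>A x - B x\<close> has
  arbitrarily small norm, hence vanishes.\<close>
lemma bounded_op_eq_on_closed_span:
  assumes \<beta>1: "\<And>i. 0 \<le> \<beta>1 i" and \<beta>2: "\<And>j. 0 < \<beta>2 j"
    and A: "bounded_op_between \<beta>1 (wl2 \<beta>1) \<beta>2 (wl2 \<beta>2) A"
    and B: "bounded_op_between \<beta>1 (wl2 \<beta>1) \<beta>2 (wl2 \<beta>2) B"
    and S: "S \<subseteq> wl2 \<beta>1" and eq: "\<And>v. v \<in> S \<Longrightarrow> A v = B v"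
    and x: "x \<in> closed_span \<beta>1 S"
  shows "A x = B x"
proof -
  have \<beta>2': "\<And>j. 0 \<le> \<beta>2 j"
    using \<beta>2 less_imp_le by blast
  obtain CA where "CA \<ge> 0" and CA: "\<And>x. x \<in> wl2 \<beta>1 \<Longrightarrow> wnorm \<beta>2 (A x) \<le> CA * wnorm \<beta>1 x"
    using bounded_op_between_nonneg_bound[OF A \<beta>1] by blast
  obtain CB where "CB \<ge> 0" and CB: "\<And>x. x \<in> wl2 \<beta>1 \<Longrightarrow> wnorm \<beta>2 (B x) \<le> CB * wnorm \<beta>1 x"
    using bounded_op_between_nonneg_bound[OF B \<beta>1] by blast
  have linA: "clinear_on (wl2 \<beta>1) A" and linB: "clinear_on (wl2 \<beta>1) B"
    and mapA: "\<And>x. x \<in> wl2 \<beta>1 \<Longrightarrow> A x \<in> wl2 \<beta>2" and mapB: "\<And>x. x \<in> wl2 \<beta>1 \<Longrightarrow> B x \<in> wl2 \<beta>2"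
    using A B by (auto simp: bounded_op_between_def)
  have xw: "x \<in> wl2 \<beta>1"
    using x closed_span_subset_wl2 by blast
  have "wnorm \<beta>2 (\<lambda>j. A x j - B x j) \<le> 0 + e" if "e > 0" for e
  proof -
    obtain y where y: "y \<in> cspan S" and xy: "wnorm \<beta>1 (\<lambda>i. x i - y i) < e / (CA + CB + 1)"
      using x \<open>e > 0\<close> \<open>CA \<ge> 0\<close> \<open>CB \<ge> 0\<close> unfolding closed_span_def by (auto dest!: spec[of _ "e / (CA + CB + 1)"])
    define d where "d i = x i - y i" for i
    have yw: "y \<in> wl2 \<beta>1" and "A y = B y"
      using clinear_on_eq_on_cspan[OF \<beta>1 linA linB S eq] y by auto
    then have dw: "d \<in> wl2 \<beta>1" and "(\<lambda>j. A x j - B x j) = (\<lambda>j. A d j - B d j)"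
      using wl2_diff[OF \<beta>1 xw yw] clinear_on_diff[OF linA xw yw] clinear_on_diff[OF linB xw yw]
      by (auto simp: d_def[abs_def] fun_eq_iff)
    then have "wnorm \<beta>2 (\<lambda>j. A x j - B x j) \<le> wnorm \<beta>2 (A d) + wnorm \<beta>2 (B d)"
      using wnorm_diff_le[OF \<beta>2' mapA[OF dw] mapB[OF dw]] by simp
    also have "\<dots> \<le> (CA + CB + 1) * wnorm \<beta>1 d"
      using CA[OF dw] CB[OF dw] wnorm_nonneg[of \<beta>1 d, OF \<beta>1] by (simp add: algebra_simps)
    also have "\<dots> \<le> e"
      using xy \<open>CA \<ge> 0\<close> \<open>CB \<ge> 0\<close> by (simp add: d_def[abs_def] field_simps)
    finally show ?thesis
      by simp
  qed
  then have "wnorm \<beta>2 (\<lambda>j. A x j - B x j) \<le> 0"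
    by (rule field_le_epsilon)
  then have "(\<lambda>j. A x j - B x j) = (\<lambda>_. 0)"
    using wnorm_nonneg[of \<beta>2, OF \<beta>2'] wl2_diff[OF \<beta>2' mapA[OF xw] mapB[OF xw]]
    by (intro wnorm_eq_0_imp_zero[OF \<beta>2]) (auto intro: antisym)
  then show ?thesis
    by (simp add: fun_eq_iff)
qed

lemma unitary_between_wnorm:
  assumes U: "unitary_between \<beta>1 M \<beta>2 N U" and \<beta>1: "\<And>i. 0 \<le> \<beta>1 i" and \<beta>2: "\<And>j. 0 \<le> \<beta>2 j"
    and M: "M \<subseteq> wl2 \<beta>1" and N: "N \<subseteq> wl2 \<beta>2" and x: "x \<in> M"
  shows "wnorm \<beta>2 (U x) = wnorm \<beta>1 x"
proof -
  have "U x \<in> N"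
    using U x unfolding unitary_between_def bij_betw_def by blast
  then have "complex_of_real ((wnorm \<beta>2 (U x))\<^sup>2) = complex_of_real ((wnorm \<beta>1 x)\<^sup>2)"
    using U x M N winner_self[of \<beta>1 x, OF \<beta>1] winner_self[of \<beta>2 "U x", OF \<beta>2]
    unfolding unitary_between_def by (metis subsetD)
  then show ?thesis
    using wnorm_nonneg[of \<beta>1, OF \<beta>1] wnorm_nonneg[of \<beta>2, OF \<beta>2]
    by (simp only: of_real_eq_iff power2_eq_iff_nonneg)
qed

lemma unitary_imp_invertible_op_between:
  assumes U: "unitary_between \<beta>1 M \<beta>2 N U" and \<beta>1: "\<And>i. 0 \<le> \<beta>1 i" and \<beta>2: "\<And>j. 0 \<le> \<beta>2 j"
    and M: "M \<subseteq> wl2 \<beta>1" and N: "N \<subseteq> wl2 \<beta>2"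
  shows "invertible_op_between \<beta>1 M \<beta>2 N U"
  using U unitary_between_wnorm[OF U \<beta>1 \<beta>2 M N]
  unfolding invertible_op_between_def bounded_op_between_def unitary_between_def bij_betw_def
  by (metis order_refl mult_1)

lemma unitary_between_inv:
  assumes U: "unitary_between \<beta>1 M \<beta>2 N U"
    and M: "\<And>x y a b. x \<in> M \<Longrightarrow> y \<in> M \<Longrightarrow> (\<lambda>i. a * x i + b * y i) \<in> M"
  shows "unitary_between \<beta>2 N \<beta>1 M (inv_into M U)"
proof -
  have lin: "clinear_on M U" and bij: "bij_betw U M N"
    and inner: "\<And>x y. x \<in> M \<Longrightarrow> y \<in> M \<Longrightarrow> winner \<beta>2 (U x) (U y) = winner \<beta>1 x y"
    using U unfolding unitary_between_def by blast+
  have V: "inv_into M U p \<in> M" and UV: "U (inv_into M U p) = p" if "p \<in> N" for p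
    using bij that by (auto simp: bij_betw_def inv_into_into f_inv_into_f)
  have "clinear_on N (inv_into M U)"
    unfolding clinear_on_def
  proof (intro ballI allI)
    fix p q a b assume "p \<in> N" "q \<in> N"
    then show "inv_into M U (\<lambda>i. a * p i + b * q i) = (\<lambda>i. a * inv_into M U p i + b * inv_into M U q i)"
      using bij V UV M by (intro inv_into_f_eq) (auto simp: bij_betw_def clinear_onD[OF lin])
  qed
  moreover have "winner \<beta>1 (inv_into M U p) (inv_into M U q) = winner \<beta>2 p q" if "p \<in> N" "q \<in> N" for p q
    using inner[OF V V] UV that by simp
  ultimately show ?thesis
    using bij_betw_inv_into[OF bij] unfolding unitary_between_def by blast
qed

lemma bundle_span_subset_wl2: "bundle_span \<beta> E \<subseteq> wl2 \<beta>"
  unfolding bundle_span_def by (rule closed_span_subset_wl2)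

lemma bundle_span_lincomb:
  assumes "\<And>i. 0 \<le> \<beta> i" and "\<And>w. w \<in> ball 0 1 \<Longrightarrow> E w \<subseteq> wl2 \<beta>"
    and "x \<in> bundle_span \<beta> E" and "y \<in> bundle_span \<beta> E"
  shows "(\<lambda>i. a * x i + b * y i) \<in> bundle_span \<beta> E"
proof -
  have "(\<Union>w\<in>ball 0 1. E w) \<subseteq> wl2 \<beta>"
    using assms(2) by blast
  from closed_span_lincomb[OF assms(1) this] show ?thesis
    using assms(3,4) unfolding bundle_span_def by blast
qed

lemma fibre_subset_bundle_span:
  assumes "\<And>i. 0 \<le> \<beta> i" and "\<And>w. w \<in> ball 0 1 \<Longrightarrow> E w \<subseteq> wl2 \<beta>" and "w \<in> ball 0 1"
  shows "E w \<subseteq> bundle_span \<beta> E"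
proof -
  have "(\<Union>w\<in>ball 0 1. E w) \<subseteq> wl2 \<beta>"
    using assms(2) by blast
  from closed_span_superset[OF assms(1) this] show ?thesis
    using assms(3) unfolding bundle_span_def by blast
qed

lemma bundle_unitary_equiv_sym:
  assumes UE: "bundle_unitary_equiv \<beta>E E \<beta>F F"
    and \<beta>F: "\<And>i. 0 \<le> \<beta>F i" and F: "\<And>w. w \<in> ball 0 1 \<Longrightarrow> F w \<subseteq> wl2 \<beta>F"
  shows "bundle_unitary_equiv \<beta>F F \<beta>E E"
proof -
  obtain U where U: "unitary_between \<beta>F (bundle_span \<beta>F F) \<beta>E (bundle_span \<beta>E E) U"
    and fib: "\<And>w. w \<in> ball 0 1 \<Longrightarrow> U ` F w = E w"
    using UE unfolding bundle_unitary_equiv_def by blast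
  have inj: "inj_on U (bundle_span \<beta>F F)"
    using U unfolding unitary_between_def bij_betw_def by blast
  have "inv_into (bundle_span \<beta>F F) U ` E w = F w" if "w \<in> ball 0 1" for w
    using inv_into_image_cancel[OF inj fibre_subset_bundle_span[of \<beta>F F w, OF \<beta>F F that]]
    by (simp add: fib[OF that])
  then show ?thesis
    using unitary_between_inv[OF U bundle_span_lincomb[of \<beta>F F, OF \<beta>F F]]
    unfolding bundle_unitary_equiv_def by blast
qed

lemma bundle_unitary_equiv_imp_similar:
  assumes "bundle_unitary_equiv \<beta>E E \<beta>F F" and "\<And>i. 0 \<le> \<beta>E i" and "\<And>j. 0 \<le> \<beta>F j"
  shows "bundle_similar \<beta>E E \<beta>F F"
proof -
  obtain U where U: "unitary_between \<beta>F (bundle_span \<beta>F F) \<beta>E (bundle_span \<beta>E E) U"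
    and "\<forall>w\<in>ball 0 1. U ` F w = E w"
    using assms(1) unfolding bundle_unitary_equiv_def by blast
  moreover have "invertible_op_between \<beta>F (bundle_span \<beta>F F) \<beta>E (bundle_span \<beta>E E) U"
    using unitary_imp_invertible_op_between[OF U assms(3,2) bundle_span_subset_wl2 bundle_span_subset_wl2] .
  ultimately show ?thesis
    unfolding bundle_similar_def by blast
qed

lemma bundle_similar_trans:
  assumes "bundle_similar \<beta>E E \<beta>F F" and "bundle_similar \<beta>F F \<beta>G G"
    and "\<And>i. 0 \<le> \<beta>E i" and "\<And>j. 0 \<le> \<beta>F j" and "\<And>k. 0 \<le> \<beta>G k"
  shows "bundle_similar \<beta>E E \<beta>G G"
proof -
  obtain X where X: "invertible_op_between \<beta>F (bundle_span \<beta>F F) \<beta>E (bundle_span \<beta>E E) X"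
    and fibX: "\<And>w. w \<in> ball 0 1 \<Longrightarrow> X ` F w = E w"
    using assms(1) unfolding bundle_similar_def by blast
  obtain Y where Y: "invertible_op_between \<beta>G (bundle_span \<beta>G G) \<beta>F (bundle_span \<beta>F F) Y"
    and fibY: "\<And>w. w \<in> ball 0 1 \<Longrightarrow> Y ` G w = F w"
    using assms(2) unfolding bundle_similar_def by blast
  have "(\<lambda>x. X (Y x)) ` G w = E w" if "w \<in> ball 0 1" for w
  proof -
    have "(\<lambda>x. X (Y x)) ` G w = X ` Y ` G w"
      by (simp add: image_image)
    then show ?thesis
      by (simp add: fibX[OF that] fibY[OF that])
  qed
  moreover have "invertible_op_between \<beta>G (bundle_span \<beta>G G) \<beta>E (bundle_span \<beta>E E) (\<lambda>x. X (Y x))"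
    by (rule invertible_op_between_compose[OF Y X assms(5,4,3)])
  ultimately show ?thesis
    unfolding bundle_similar_def by (intro exI[of _ "\<lambda>x. X (Y x)"]) auto
qed

lemma unitary_equiv_bundle_similar_iff:
  assumes UE: "bundle_unitary_equiv \<beta>E E \<beta>F F"
    and \<beta>E: "\<And>i. 0 \<le> \<beta>E i" and \<beta>F: "\<And>j. 0 \<le> \<beta>F j" and \<beta>G: "\<And>k. 0 \<le> \<beta>G k"
    and F: "\<And>w. w \<in> ball 0 1 \<Longrightarrow> F w \<subseteq> wl2 \<beta>F"
  shows "bundle_similar \<beta>E E \<beta>G G \<longleftrightarrow> bundle_similar \<beta>F F \<beta>G G"
proof
  have "bundle_similar \<beta>F F \<beta>E E"
    using bundle_unitary_equiv_sym[OF UE \<beta>F F] \<beta>F \<beta>E by (rule bundle_unitary_equiv_imp_similar)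
  moreover assume "bundle_similar \<beta>E E \<beta>G G"
  ultimately show "bundle_similar \<beta>F F \<beta>G G"
    using \<beta>F \<beta>E \<beta>G by (rule bundle_similar_trans)
next
  have "bundle_similar \<beta>E E \<beta>F F"
    using UE \<beta>E \<beta>F by (rule bundle_unitary_equiv_imp_similar)
  moreover assume "bundle_similar \<beta>F F \<beta>G G"
  ultimately show "bundle_similar \<beta>E E \<beta>G G"
    using \<beta>E \<beta>F \<beta>G by (rule bundle_similar_trans)
qed

section \<open>Similarity of operators via their eigenvector bundles\<close>

lemma eig_bundle_image:
  assumes lin: "clinear_on (wl2 \<beta>2) X" and bij: "bij_betw X (wl2 \<beta>2) (wl2 \<beta>1)"
    and S: "\<And>x. x \<in> wl2 \<beta>2 \<Longrightarrow> S x \<in> wl2 \<beta>2" and \<beta>2: "\<And>j. 0 \<le> \<beta>2 j"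
    and intertwine: "\<And>x. x \<in> wl2 \<beta>2 \<Longrightarrow> X (S x) = T (X x)"
  shows "X ` eig_bundle \<beta>2 S w = eig_bundle \<beta>1 T w"
proof (intro equalityI subsetI)
  fix y assume "y \<in> X ` eig_bundle \<beta>2 S w"
  then obtain x where x: "x \<in> wl2 \<beta>2" "S x = (\<lambda>i. w * x i)" and y: "y = X x"
    unfolding eig_bundle_def by blast
  then have "T y = (\<lambda>j. w * y j)"
    using intertwine clinear_on_scale[OF lin] by metis
  then show "y \<in> eig_bundle \<beta>1 T w"
    using bij x y by (auto simp: eig_bundle_def bij_betw_def)
next
  fix y assume "y \<in> eig_bundle \<beta>1 T w"
  then have y: "y \<in> wl2 \<beta>1" and Ty: "T y = (\<lambda>j. w * y j)"
    by (auto simp: eig_bundle_def)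
  then obtain x where x: "x \<in> wl2 \<beta>2" and yx: "y = X x"
    using bij by (auto simp: bij_betw_def)
  have "X (S x) = X (\<lambda>i. w * x i)"
    using intertwine[OF x] Ty clinear_on_scale[OF lin x] yx by simp
  then have "S x = (\<lambda>i. w * x i)"
    using bij S[OF x] wl2_scale[of \<beta>2 x w, OF \<beta>2 x] x by (auto simp: bij_betw_def dest: inj_onD)
  then show "y \<in> X ` eig_bundle \<beta>2 S w"
    using x yx by (auto simp: eig_bundle_def)
qed

lemma op_similar_imp_eig_bundle_similar:
  assumes "op_similar \<beta>1 T \<beta>2 S" and \<beta>2: "\<And>j. 0 \<le> \<beta>2 j"
    and S: "\<And>x. x \<in> wl2 \<beta>2 \<Longrightarrow> S x \<in> wl2 \<beta>2"
    and span_T: "bundle_span \<beta>1 (eig_bundle \<beta>1 T) = wl2 \<beta>1"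
    and span_S: "bundle_span \<beta>2 (eig_bundle \<beta>2 S) = wl2 \<beta>2"
  shows "bundle_similar \<beta>1 (eig_bundle \<beta>1 T) \<beta>2 (eig_bundle \<beta>2 S)"
proof -
  obtain X where X: "invertible_op_between \<beta>2 (wl2 \<beta>2) \<beta>1 (wl2 \<beta>1) X"
    and intertwine: "\<And>x. x \<in> wl2 \<beta>2 \<Longrightarrow> X (S x) = T (X x)"
    using assms(1) unfolding op_similar_def by blast
  have "X ` eig_bundle \<beta>2 S w = eig_bundle \<beta>1 T w" for w
  proof (rule eig_bundle_image)
    show "clinear_on (wl2 \<beta>2) X" and "bij_betw X (wl2 \<beta>2) (wl2 \<beta>1)"
      using X by (auto simp: invertible_op_between_def bounded_op_between_def)
  qed (use S \<beta>2 intertwine in auto)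
  then show ?thesis
    unfolding bundle_similar_def span_T span_S using X by blast
qed

lemma eig_bundle_similar_imp_op_similar:
  assumes "bundle_similar \<beta>1 (eig_bundle \<beta>1 T) \<beta>2 (eig_bundle \<beta>2 S)"
    and \<beta>1: "\<And>i. 0 < \<beta>1 i" and \<beta>2: "\<And>j. 0 \<le> \<beta>2 j"
    and T: "bounded_operator \<beta>1 T" and S: "bounded_operator \<beta>2 S"
    and span_T: "bundle_span \<beta>1 (eig_bundle \<beta>1 T) = wl2 \<beta>1"
    and span_S: "bundle_span \<beta>2 (eig_bundle \<beta>2 S) = wl2 \<beta>2"
  shows "op_similar \<beta>1 T \<beta>2 S"
proof -
  have \<beta>1': "\<And>i. 0 \<le> \<beta>1 i"
    using \<beta>1 less_imp_le by blast
  obtain X where X: "invertible_op_between \<beta>2 (wl2 \<beta>2) \<beta>1 (wl2 \<beta>1) X"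
    and fib: "\<And>w. w \<in> ball 0 1 \<Longrightarrow> X ` eig_bundle \<beta>2 S w = eig_bundle \<beta>1 T w"
    using assms(1) unfolding bundle_similar_def span_T span_S by blast
  have Xb: "bounded_op_between \<beta>2 (wl2 \<beta>2) \<beta>1 (wl2 \<beta>1) X"
    using X by (simp add: invertible_op_between_def)
  have "X (S v) = T (X v)" if eigvec: "v \<in> (\<Union>w\<in>ball 0 1. eig_bundle \<beta>2 S w)" for v
  proof -
    obtain w where w: "w \<in> ball 0 1" and v: "v \<in> wl2 \<beta>2" "S v = (\<lambda>i. w * v i)"
      using eigvec unfolding eig_bundle_def by blast
    then have "X v \<in> eig_bundle \<beta>1 T w"
      using fib[OF w] by (auto simp: eig_bundle_def)
    then show ?thesis
      using v clinear_on_scale[of "wl2 \<beta>2" X v w] Xb by (simp add: eig_bundle_def bounded_op_between_def)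
  qed
  moreover have "bounded_op_between \<beta>2 (wl2 \<beta>2) \<beta>1 (wl2 \<beta>1) (\<lambda>x. X (S x))"
    using bounded_op_between_compose[OF S[unfolded bounded_operator_def] Xb \<beta>2 \<beta>2] .
  moreover have "bounded_op_between \<beta>2 (wl2 \<beta>2) \<beta>1 (wl2 \<beta>1) (\<lambda>x. T (X x))"
    using bounded_op_between_compose[OF Xb T[unfolded bounded_operator_def] \<beta>2 \<beta>1'] .
  moreover have "(\<Union>w\<in>ball 0 1. eig_bundle \<beta>2 S w) \<subseteq> wl2 \<beta>2"
    by (auto simp: eig_bundle_def)
  ultimately have "X (S x) = T (X x)" if "x \<in> wl2 \<beta>2" for x
    using bounded_op_eq_on_closed_span[of \<beta>2 \<beta>1, OF \<beta>2 \<beta>1] that span_S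
    unfolding bundle_span_def by blast
  then show ?thesis
    unfolding op_similar_def using X by blast
qed

lemma op_similar_iff_eig_bundle_similar:
  assumes \<beta>1: "\<And>i. 0 < \<beta>1 i" and \<beta>2: "\<And>j. 0 < \<beta>2 j"
    and T: "bounded_operator \<beta>1 T" and S: "bounded_operator \<beta>2 S"
    and span_T: "bundle_span \<beta>1 (eig_bundle \<beta>1 T) = wl2 \<beta>1"
    and span_S: "bundle_span \<beta>2 (eig_bundle \<beta>2 S) = wl2 \<beta>2"
  shows "op_similar \<beta>1 T \<beta>2 S \<longleftrightarrow> bundle_similar \<beta>1 (eig_bundle \<beta>1 T) \<beta>2 (eig_bundle \<beta>2 S)"
proof -
  have \<beta>2': "\<And>j. 0 \<le> \<beta>2 j"
    using \<beta>2 less_imp_le by blast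
  have S_map: "\<And>x. x \<in> wl2 \<beta>2 \<Longrightarrow> S x \<in> wl2 \<beta>2"
    using S by (auto simp: bounded_operator_def bounded_op_between_def)
  show ?thesis
  proof
    assume "op_similar \<beta>1 T \<beta>2 S"
    then show "bundle_similar \<beta>1 (eig_bundle \<beta>1 T) \<beta>2 (eig_bundle \<beta>2 S)"
      using \<beta>2' S_map span_T span_S by (rule op_similar_imp_eig_bundle_similar)
  next
    assume "bundle_similar \<beta>1 (eig_bundle \<beta>1 T) \<beta>2 (eig_bundle \<beta>2 S)"
    then show "op_similar \<beta>1 T \<beta>2 S"
      using \<beta>1 \<beta>2' T S span_T span_S by (rule eig_bundle_similar_imp_op_similar)
  qed
qed

section \<open>The operator \<open>D\<^sub>\<alpha>\<^sup>*\<close>\<close>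

lemma dir_weight_pos: "0 < dir_weight \<alpha> n"
  by (simp add: dir_weight_def)

lemma dir_weight_ge_1: "0 \<le> \<alpha> \<Longrightarrow> 1 \<le> dir_weight \<alpha> n"
  unfolding dir_weight_def by (rule ge_one_powr_ge_zero) auto

lemma dir_weight_Suc_le: "0 \<le> \<alpha> \<Longrightarrow> dir_weight \<alpha> (Suc n) \<le> 2 powr \<alpha> * dir_weight \<alpha> n"
proof -
  assume "0 \<le> \<alpha>"
  have "dir_weight \<alpha> (Suc n) = ((real n + 2) / (real n + 1)) powr \<alpha> * dir_weight \<alpha> n"
    by (simp add: dir_weight_def powr_divide add.commute)
  also have "\<dots> \<le> 2 powr \<alpha> * dir_weight \<alpha> n"
    using \<open>0 \<le> \<alpha>\<close> dir_weight_pos[of \<alpha> n]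
    by (intro mult_right_mono powr_mono2) (auto simp: field_simps)
  finally show ?thesis .
qed

definition unit_vec :: "'i \<Rightarrow> 'i \<Rightarrow> complex" where
  "unit_vec k = (\<lambda>n. if n = k then 1 else 0)"

lemma winner_unit_vec: "winner \<beta> (unit_vec k) g = complex_of_real (\<beta> k) * cnj (g k)"
proof -
  have "((\<lambda>i. complex_of_real (\<beta> i) * unit_vec k i * cnj (g i)) has_sum complex_of_real (\<beta> k) * cnj (g k)) UNIV"
    by (rule has_sum_finite_neutralI[of "{k}"]) (auto simp: unit_vec_def)
  then show ?thesis
    unfolding winner_def by (rule infsumI)
qed

lemma unit_vec_wl2: "unit_vec k \<in> wl2 \<beta>"
proof -
  have "((\<lambda>i. \<beta> i * (cmod (unit_vec k i))\<^sup>2) has_sum \<beta> k) UNIV"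
    by (rule has_sum_finite_neutralI[of "{k}"]) (auto simp: unit_vec_def)
  then show ?thesis
    unfolding wl2_def using has_sum_imp_summable by blast
qed

lemma shift_z_unit_vec: "shift_z (unit_vec m) = unit_vec (Suc m)"
  unfolding shift_z_def unit_vec_def by (auto simp: fun_eq_iff)

text \<open>\<open>D\<^sub>\<alpha>\<^sup>*\<close> in Taylor coefficients, read off from
  \<open>\<langle>z f, g\<rangle> = (\<Sum>m. (m + 2) powr \<alpha> * f m * cnj (g (m + 1)))\<close>. Outside the space it is \<open>0\<close>,
  as \<open>Dstar\<close> is.\<close>
definition backward_shift :: "real \<Rightarrow> (nat \<Rightarrow> complex) \<Rightarrow> nat \<Rightarrow> complex" where
  "backward_shift \<alpha> g = (if g \<in> wl2 (dir_weight \<alpha>)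
     then (\<lambda>m. complex_of_real (dir_weight \<alpha> (Suc m) / dir_weight \<alpha> m) * g (Suc m)) else (\<lambda>_. 0))"

lemma infsum_Suc_le:
  fixes G :: "nat \<Rightarrow> real"
  assumes G: "G summable_on UNIV" and nonneg: "\<And>n. 0 \<le> G n"
  shows "(\<lambda>m. G (Suc m)) summable_on UNIV" and "(\<Sum>\<^sub>\<infinity>m. G (Suc m)) \<le> (\<Sum>\<^sub>\<infinity>n. G n)"
proof -
  have G_Suc: "G summable_on range Suc"
    by (rule summable_on_subset_banach[OF G]) auto
  then show "(\<lambda>m. G (Suc m)) summable_on UNIV"
    using summable_on_reindex[of Suc UNIV G] by (simp add: o_def)
  have "(\<Sum>\<^sub>\<infinity>m. G (Suc m)) = infsum G (range Suc)"
    using infsum_reindex[of Suc UNIV G] by (simp add: o_def)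
  also have "\<dots> \<le> (\<Sum>\<^sub>\<infinity>n. G n)"
    using nonneg by (intro infsum_mono_neutral[OF G_Suc G]) auto
  finally show "(\<Sum>\<^sub>\<infinity>m. G (Suc m)) \<le> (\<Sum>\<^sub>\<infinity>n. G n)" .
qed

lemma backward_shift_bounded:
  assumes "0 \<le> \<alpha>" and g: "g \<in> wl2 (dir_weight \<alpha>)"
  shows "backward_shift \<alpha> g \<in> wl2 (dir_weight \<alpha>)"
    and "wnorm (dir_weight \<alpha>) (backward_shift \<alpha> g) \<le> sqrt (2 powr \<alpha>) * wnorm (dir_weight \<alpha>) g"
proof -
  let ?\<beta> = "dir_weight \<alpha>"
  define G where "G n = ?\<beta> n * (cmod (g n))\<^sup>2" for n
  have G: "G summable_on UNIV" and G_nonneg: "\<And>n. 0 \<le> G n"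
    using g dir_weight_pos[of \<alpha>] by (auto simp: wl2_def G_def[abs_def] less_imp_le)
  have eq: "?\<beta> m * (cmod (backward_shift \<alpha> g m))\<^sup>2 = ?\<beta> (Suc m) / ?\<beta> m * G (Suc m)" for m
  proof -
    have "cmod (backward_shift \<alpha> g m) = ?\<beta> (Suc m) / ?\<beta> m * cmod (g (Suc m))"
      using g dir_weight_pos[of \<alpha> m] dir_weight_pos[of \<alpha> "Suc m"]
      by (simp add: backward_shift_def norm_mult norm_divide)
    then show ?thesis
      using dir_weight_pos[of \<alpha> m] by (simp only:) (simp add: G_def power2_eq_square)
  qed
  have le: "?\<beta> (Suc m) / ?\<beta> m * G (Suc m) \<le> 2 powr \<alpha> * G (Suc m)" for m
    using dir_weight_Suc_le[OF \<open>0 \<le> \<alpha>\<close>, of m] dir_weight_pos[of \<alpha> m] G_nonneg[of "Suc m"]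
    by (intro mult_right_mono) (auto simp: divide_le_eq)
  have major: "(\<lambda>m. 2 powr \<alpha> * G (Suc m)) summable_on UNIV"
    by (intro summable_on_cmult_right infsum_Suc_le(1)[OF G G_nonneg])
  have summable: "(\<lambda>m. ?\<beta> m * (cmod (backward_shift \<alpha> g m))\<^sup>2) summable_on UNIV"
  proof (rule summable_on_comparison_test[OF major])
    show "?\<beta> m * (cmod (backward_shift \<alpha> g m))\<^sup>2 \<le> 2 powr \<alpha> * G (Suc m)" for m
      using eq le by simp
    show "0 \<le> ?\<beta> m * (cmod (backward_shift \<alpha> g m))\<^sup>2" for m
      using dir_weight_pos[of \<alpha> m] by simp
  qed
  then show "backward_shift \<alpha> g \<in> wl2 ?\<beta>"
    by (simp add: wl2_def)
  have "(\<Sum>\<^sub>\<infinity>m. ?\<beta> m * (cmod (backward_shift \<alpha> g m))\<^sup>2) \<le> (\<Sum>\<^sub>\<infinity>m. 2 powr \<alpha> * G (Suc m))"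
    unfolding eq using le by (intro infsum_mono[OF summable[unfolded eq] major])
  also have "\<dots> \<le> 2 powr \<alpha> * (\<Sum>\<^sub>\<infinity>n. G n)"
    using infsum_Suc_le(2)[OF G G_nonneg] by (simp add: infsum_cmult_right')
  finally show "wnorm ?\<beta> (backward_shift \<alpha> g) \<le> sqrt (2 powr \<alpha>) * wnorm ?\<beta> g"
    unfolding wnorm_def G_def by (simp add: real_sqrt_mult[symmetric])
qed

lemma winner_shift_z:
  assumes g: "g \<in> wl2 (dir_weight \<alpha>)"
  shows "winner (dir_weight \<alpha>) (shift_z f) g = winner (dir_weight \<alpha>) f (backward_shift \<alpha> g)"
proof -
  let ?\<beta> = "dir_weight \<alpha>"
  define H where "H n = complex_of_real (?\<beta> n) * shift_z f n * cnj (g n)" for n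
  have "winner ?\<beta> (shift_z f) g = infsum H (range Suc)"
    unfolding winner_def H_def[symmetric]
    by (rule infsum_cong_neutral) (auto simp: H_def shift_z_def image_iff gr0_conv_Suc)
  also have "\<dots> = (\<Sum>\<^sub>\<infinity>m. H (Suc m))"
    using infsum_reindex[of Suc UNIV H] by (simp add: o_def)
  also have "\<dots> = winner ?\<beta> f (backward_shift \<alpha> g)"
    unfolding winner_def using g dir_weight_pos[of \<alpha>]
    by (intro infsum_cong) (simp add: H_def shift_z_def backward_shift_def less_imp_neq[symmetric])
  finally show ?thesis .
qed

lemma backward_shift_eq_if_adjoint:
  assumes g: "g \<in> wl2 (dir_weight \<alpha>)"
    and adjoint: "winner (dir_weight \<alpha>) (shift_z (unit_vec m)) g = winner (dir_weight \<alpha>) (unit_vec m) h"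
  shows "h m = backward_shift \<alpha> g m"
proof -
  have "cnj (h m) = cnj (complex_of_real (dir_weight \<alpha> (Suc m) / dir_weight \<alpha> m) * g (Suc m))"
    using adjoint dir_weight_pos[of \<alpha> m] by (simp add: shift_z_unit_vec winner_unit_vec field_simps)
  then show ?thesis
    using g by (simp only: complex_cnj_cancel_iff) (simp add: backward_shift_def)
qed

lemma Dstar_eq_backward_shift:
  assumes "0 \<le> \<alpha>"
  shows "Dstar \<alpha> = backward_shift \<alpha>"
  unfolding Dstar_def
proof (rule the_equality)
  show "(\<forall>g\<in>wl2 (dir_weight \<alpha>). backward_shift \<alpha> g \<in> wl2 (dir_weight \<alpha>)) \<and>
    (\<forall>f\<in>wl2 (dir_weight \<alpha>). \<forall>g\<in>wl2 (dir_weight \<alpha>).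
        winner (dir_weight \<alpha>) (shift_z f) g = winner (dir_weight \<alpha>) f (backward_shift \<alpha> g)) \<and>
    (\<forall>g. g \<notin> wl2 (dir_weight \<alpha>) \<longrightarrow> backward_shift \<alpha> g = (\<lambda>_. 0))"
  proof (intro conjI ballI allI impI)
    show "backward_shift \<alpha> g \<in> wl2 (dir_weight \<alpha>)" if "g \<in> wl2 (dir_weight \<alpha>)" for g
      using backward_shift_bounded(1)[OF assms that] .
    show "winner (dir_weight \<alpha>) (shift_z f) g = winner (dir_weight \<alpha>) f (backward_shift \<alpha> g)"
      if "g \<in> wl2 (dir_weight \<alpha>)" for f g
      using winner_shift_z[OF that] .
    show "backward_shift \<alpha> g = (\<lambda>_. 0)" if "g \<notin> wl2 (dir_weight \<alpha>)" for g
      using that by (simp add: backward_shift_def)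
  qed
next
  fix A
  assume A: "(\<forall>g\<in>wl2 (dir_weight \<alpha>). A g \<in> wl2 (dir_weight \<alpha>)) \<and>
    (\<forall>f\<in>wl2 (dir_weight \<alpha>). \<forall>g\<in>wl2 (dir_weight \<alpha>).
        winner (dir_weight \<alpha>) (shift_z f) g = winner (dir_weight \<alpha>) f (A g)) \<and>
    (\<forall>g. g \<notin> wl2 (dir_weight \<alpha>) \<longrightarrow> A g = (\<lambda>_. 0))"
  have "A g m = backward_shift \<alpha> g m" if g: "g \<in> wl2 (dir_weight \<alpha>)" for g m
    using A g unit_vec_wl2[of m "dir_weight \<alpha>"] by (intro backward_shift_eq_if_adjoint[OF g]) simp
  moreover have "A g = backward_shift \<alpha> g" if "g \<notin> wl2 (dir_weight \<alpha>)" for g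
    using A that by (simp add: backward_shift_def)
  ultimately show "A = backward_shift \<alpha>"
    by (auto simp: fun_eq_iff)
qed

lemma Dstar_bounded:
  assumes "0 \<le> \<alpha>"
  shows "bounded_operator (dir_weight \<alpha>) (Dstar \<alpha>)"
  unfolding bounded_operator_def bounded_op_between_def Dstar_eq_backward_shift[OF assms]
proof (intro conjI)
  show "clinear_on (wl2 (dir_weight \<alpha>)) (backward_shift \<alpha>)"
    unfolding clinear_on_def
  proof (intro ballI allI)
    fix x y a b assume "x \<in> wl2 (dir_weight \<alpha>)" "y \<in> wl2 (dir_weight \<alpha>)"
    moreover from this have "(\<lambda>i. a * x i + b * y i) \<in> wl2 (dir_weight \<alpha>)"
      using dir_weight_pos less_imp_le by (intro wl2_lincomb) blast+
    ultimately show "backward_shift \<alpha> (\<lambda>i. a * x i + b * y i)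
        = (\<lambda>j. a * backward_shift \<alpha> x j + b * backward_shift \<alpha> y j)"
      by (simp add: backward_shift_def algebra_simps)
  qed
  show "backward_shift \<alpha> ` wl2 (dir_weight \<alpha>) \<subseteq> wl2 (dir_weight \<alpha>)"
    using backward_shift_bounded(1)[OF assms] by blast
  show "\<exists>C. \<forall>g\<in>wl2 (dir_weight \<alpha>). wnorm (dir_weight \<alpha>) (backward_shift \<alpha> g) \<le> C * wnorm (dir_weight \<alpha>) g"
    using backward_shift_bounded(2)[OF assms] by blast
qed

section \<open>The eigenvectors of \<open>D\<^sub>\<alpha>\<^sup>*\<close> span \<open>D\<^sub>\<alpha>\<close>\<close>

definition dir_kernel :: "real \<Rightarrow> complex \<Rightarrow> nat \<Rightarrow> complex" where
  "dir_kernel \<alpha> w = (\<lambda>n. w ^ n / complex_of_real (dir_weight \<alpha> n))"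

lemma dir_kernel_wl2:
  assumes "0 \<le> \<alpha>" and "cmod w < 1"
  shows "dir_kernel \<alpha> w \<in> wl2 (dir_weight \<alpha>)"
  unfolding wl2_def mem_Collect_eq
proof (rule summable_on_comparison_test)
  show "(\<lambda>n. ((cmod w)\<^sup>2) ^ n) summable_on UNIV"
    using assms(2) by (subst summable_on_UNIV_nonneg_real_iff)
      (auto intro!: summable_geometric simp: abs_square_less_1)
  fix n
  have "dir_weight \<alpha> n * (cmod (dir_kernel \<alpha> w n))\<^sup>2 = ((cmod w)\<^sup>2) ^ n / dir_weight \<alpha> n"
    using dir_weight_pos[of \<alpha> n]
    by (simp add: dir_kernel_def norm_divide norm_power power2_eq_square power_mult_distrib field_simps)
  also have "\<dots> \<le> ((cmod w)\<^sup>2) ^ n"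
    using dir_weight_ge_1[OF assms(1), of n] by (simp add: divide_le_eq mult_le_cancel_left1)
  finally show "dir_weight \<alpha> n * (cmod (dir_kernel \<alpha> w n))\<^sup>2 \<le> ((cmod w)\<^sup>2) ^ n" .
  show "0 \<le> dir_weight \<alpha> n * (cmod (dir_kernel \<alpha> w n))\<^sup>2"
    using dir_weight_pos[of \<alpha> n] by simp
qed

lemma dir_kernel_eigvec:
  assumes "0 \<le> \<alpha>" and "cmod w < 1"
  shows "dir_kernel \<alpha> w \<in> eig_bundle (dir_weight \<alpha>) (Dstar \<alpha>) w"
  using dir_kernel_wl2[OF assms] dir_weight_pos[of \<alpha>]
  by (simp add: eig_bundle_def Dstar_eq_backward_shift[OF assms(1)] backward_shift_def
      dir_kernel_def fun_eq_iff field_simps less_imp_neq[symmetric])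

text \<open>Chosen so that \<open>dir_kernel \<alpha> w = (\<Sum>n. w ^ n * coeff_vec \<alpha> n)\<close>.\<close>
definition coeff_vec :: "real \<Rightarrow> nat \<Rightarrow> nat \<Rightarrow> complex" where
  "coeff_vec \<alpha> m = (\<lambda>n. if n = m then 1 / complex_of_real (dir_weight \<alpha> m) else 0)"

lemma coeff_vec_wl2: "coeff_vec \<alpha> m \<in> wl2 (dir_weight \<alpha>)"
proof -
  have "(\<lambda>n. 1 / complex_of_real (dir_weight \<alpha> m) * unit_vec m n) \<in> wl2 (dir_weight \<alpha>)"
    using dir_weight_pos[of \<alpha>] by (intro wl2_scale unit_vec_wl2) (simp add: less_imp_le)
  moreover have "coeff_vec \<alpha> m = (\<lambda>n. 1 / complex_of_real (dir_weight \<alpha> m) * unit_vec m n)"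
    by (simp add: coeff_vec_def unit_vec_def fun_eq_iff)
  ultimately show ?thesis
    by simp
qed

lemma dir_kernel_taylor_remainder:
  assumes "w \<noteq> 0"
  shows "(dir_kernel \<alpha> w n - (\<Sum>i<m. w ^ i * coeff_vec \<alpha> i n)) / w ^ m - coeff_vec \<alpha> m n
    = (if m < n then w ^ (n - m) / complex_of_real (dir_weight \<alpha> n) else 0)"
proof -
  have "(\<Sum>i<m. w ^ i * coeff_vec \<alpha> i n) = (if n < m then dir_kernel \<alpha> w n else 0)"
    by (simp add: coeff_vec_def dir_kernel_def if_distrib[of "(*) _"] cong: if_cong)
  then show ?thesis
    using assms by (auto simp: dir_kernel_def coeff_vec_def power_diff)
qed

lemma has_sum_geometric_tail:
  fixes q :: real
  assumes "0 \<le> q" and "q < 1"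
  shows "((\<lambda>n. if m < n then q ^ (n - m) else 0) has_sum q / (1 - q)) UNIV"
proof -
  have "(\<lambda>k. q * q ^ k) sums (q * (1 / (1 - q)))"
    using assms by (intro sums_mult geometric_sums) simp
  then have "((\<lambda>k. q ^ Suc k) has_sum q / (1 - q)) UNIV"
    using assms by (intro sums_nonneg_imp_has_sum) simp_all
  then have "((\<lambda>n. q ^ (n - m)) has_sum q / (1 - q)) (range (\<lambda>k. Suc (m + k)))"
    by (subst has_sum_reindex) (auto simp: o_def inj_def)
  moreover have "range (\<lambda>k. Suc (m + k)) = {n. m < n}"
    by (auto simp: image_iff less_iff_Suc_add)
  ultimately have "((\<lambda>n. q ^ (n - m)) has_sum q / (1 - q)) {n. m < n}"
    by simp
  then show ?thesis
    by (subst (asm) has_sum_cong_neutral[where T = UNIV and g = "\<lambda>n. if m < n then q ^ (n - m) else 0"])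
      auto
qed

lemma wnorm_taylor_remainder_le:
  assumes "0 \<le> \<alpha>" and "cmod w \<le> 1/2"
  shows "wnorm (dir_weight \<alpha>) (\<lambda>n. if m < n then w ^ (n - m) / complex_of_real (dir_weight \<alpha> n) else 0)
    \<le> 2 * cmod w"
proof -
  let ?q = "(cmod w)\<^sup>2"
  let ?f = "\<lambda>n. dir_weight \<alpha> n * (cmod (if m < n then w ^ (n - m) / complex_of_real (dir_weight \<alpha> n) else 0))\<^sup>2"
  have q: "0 \<le> ?q" "?q \<le> 1/4"
    using assms(2) power_mono[OF assms(2), of 2] by (auto simp: power2_eq_square)
  have tail: "((\<lambda>n. if m < n then ?q ^ (n - m) else 0) has_sum ?q / (1 - ?q)) UNIV"
    using q by (intro has_sum_geometric_tail) auto
  have le: "?f n \<le> (if m < n then ?q ^ (n - m) else 0)" for n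
    using dir_weight_ge_1[OF assms(1), of n]
    by (auto simp: norm_divide norm_power power2_eq_square power_mult_distrib[symmetric] divide_le_eq
        mult_le_cancel_left1 simp flip: power_mult)
  have "?f summable_on UNIV"
    using le by (rule summable_on_comparison_test[OF has_sum_imp_summable[OF tail]])
      (use dir_weight_pos[of \<alpha>] in \<open>simp add: less_imp_le\<close>)
  then have "infsum ?f UNIV \<le> ?q / (1 - ?q)"
    using infsum_mono[OF _ has_sum_imp_summable[OF tail] le] infsumI[OF tail] by simp
  also have "\<dots> \<le> ?q / (3/4)"
    using q by (intro divide_left_mono) auto
  also have "\<dots> \<le> (2 * cmod w)\<^sup>2"
    using q by (simp add: power_mult_distrib)
  finally show ?thesis
    unfolding wnorm_def by (intro real_le_lsqrt) auto
qed

text \<open>Induction on \<open>m\<close>: \<open>(dir_kernel \<alpha> r - (\<Sum>i<m. r ^ i * coeff_vec \<alpha> i)) / r ^ m\<close> lies in the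
  closed span and differs from \<open>coeff_vec \<alpha> m\<close> by a tail of norm at most \<open>2 r\<close>, for every
  small \<open>r > 0\<close>.\<close>
lemma coeff_vec_in_closed_span:
  assumes "0 \<le> \<alpha>"
  shows "coeff_vec \<alpha> m \<in> closed_span (dir_weight \<alpha>) (\<Union>w\<in>ball 0 1. eig_bundle (dir_weight \<alpha>) (Dstar \<alpha>) w)"
proof (induction m rule: less_induct)
  case (less m)
  let ?\<beta> = "dir_weight \<alpha>"
  let ?S = "\<Union>w\<in>ball 0 1. eig_bundle (dir_weight \<alpha>) (Dstar \<alpha>) w"
  have \<beta>: "\<And>n. 0 \<le> ?\<beta> n"
    using dir_weight_pos less_imp_le by blast
  have S: "?S \<subseteq> wl2 ?\<beta>"
    by (auto simp: eig_bundle_def)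
  show ?case
  proof (rule closed_span_closed[OF \<beta> S coeff_vec_wl2])
    fix e :: real assume "e > 0"
    define r where "r = min (1/2) (e/4)"
    have r: "0 < r" "r \<le> 1/2" "2 * r < e"
      using \<open>e > 0\<close> by (auto simp: r_def)
    define w where "w = complex_of_real r"
    have w: "w \<noteq> 0" "cmod w = r"
      using r by (auto simp: w_def)
    have "cmod w < 1"
      using r w by simp
    then have "dir_kernel \<alpha> w \<in> ?S"
      using dir_kernel_eigvec[OF assms] by (intro UN_I[of w]) auto
    then have kernel: "dir_kernel \<alpha> w \<in> closed_span ?\<beta> ?S"
      using closed_span_superset[OF \<beta> S] by blast
    have partial: "(\<lambda>n. \<Sum>i<m. w ^ i * coeff_vec \<alpha> i n) \<in> closed_span ?\<beta> ?S"
      using less.IH by (rule closed_span_sum[OF \<beta> S])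
    define g where "g n = (dir_kernel \<alpha> w n - (\<Sum>i<m. w ^ i * coeff_vec \<alpha> i n)) / w ^ m" for n
    have g_eq: "g = (\<lambda>n. 1 / w ^ m * dir_kernel \<alpha> w n + (- 1 / w ^ m) * (\<Sum>i<m. w ^ i * coeff_vec \<alpha> i n))"
      by (simp add: g_def fun_eq_iff diff_divide_distrib)
    have g: "g \<in> closed_span ?\<beta> ?S"
      unfolding g_eq by (rule closed_span_lincomb[OF \<beta> S kernel partial])
    have "wnorm ?\<beta> (\<lambda>n. coeff_vec \<alpha> m n - g n)
        = wnorm ?\<beta> (\<lambda>n. if m < n then w ^ (n - m) / complex_of_real (?\<beta> n) else 0)"
      using dir_kernel_taylor_remainder[OF w(1)] by (subst wnorm_minus_commute) (simp add: g_def)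
    also have "\<dots> < e"
      using wnorm_taylor_remainder_le[OF assms, of w m] r w by simp
    finally show "\<exists>y\<in>closed_span ?\<beta> ?S. wnorm ?\<beta> (\<lambda>n. coeff_vec \<alpha> m n - y n) < e"
      using g by blast
  qed
qed

lemma infsum_tail_small:
  fixes f :: "nat \<Rightarrow> real"
  assumes f: "f summable_on UNIV" and nonneg: "\<And>n. 0 \<le> f n" and "e > 0"
  obtains N where "(\<Sum>\<^sub>\<infinity>n. if n < N then 0 else f n) < e"
proof -
  obtain F where F: "finite F" "dist (sum f F) (infsum f UNIV) \<le> e / 2"
    using infsum_finite_approximation[OF f, of "e / 2"] \<open>e > 0\<close> by auto
  obtain N where N: "\<forall>n\<in>F. n < N"
    using F(1) finite_nat_set_iff_bounded by blast
  have head: "(\<lambda>n. if n < N then f n else 0) summable_on UNIV"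
    and tail: "(\<lambda>n. if n < N then 0 else f n) summable_on UNIV"
    using nonneg by (auto intro: summable_on_comparison_test[OF f])
  have "infsum f UNIV = (\<Sum>\<^sub>\<infinity>n. if n < N then f n else 0) + (\<Sum>\<^sub>\<infinity>n. if n < N then 0 else f n)"
    by (subst infsum_add[OF head tail, symmetric]) (auto intro: infsum_cong)
  also have "(\<Sum>\<^sub>\<infinity>n. if n < N then f n else 0) = sum f {..<N}"
    by (subst infsum_cong_neutral[where T = "{..<N}" and g = f]) auto
  finally have "(\<Sum>\<^sub>\<infinity>n. if n < N then 0 else f n) = infsum f UNIV - sum f {..<N}"
    by simp
  moreover have "sum f F \<le> sum f {..<N}"
    using N nonneg by (intro sum_mono2) auto
  moreover have "infsum f UNIV - sum f F \<le> e / 2"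
    using F(2) unfolding dist_real_def by linarith
  ultimately show thesis
    using \<open>e > 0\<close> by (intro that[of N]) linarith
qed

lemma Dstar_eigvecs_span:
  assumes "0 \<le> \<alpha>"
  shows "bundle_span (dir_weight \<alpha>) (eig_bundle (dir_weight \<alpha>) (Dstar \<alpha>)) = wl2 (dir_weight \<alpha>)"
proof (intro equalityI subsetI)
  let ?\<beta> = "dir_weight \<alpha>"
  let ?S = "\<Union>w\<in>ball 0 1. eig_bundle (dir_weight \<alpha>) (Dstar \<alpha>) w"
  have \<beta>: "\<And>n. 0 \<le> ?\<beta> n"
    using dir_weight_pos less_imp_le by blast
  have S: "?S \<subseteq> wl2 ?\<beta>"
    by (auto simp: eig_bundle_def)
  fix h assume h: "h \<in> wl2 ?\<beta>"
  have "h \<in> closed_span ?\<beta> ?S"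
  proof (rule closed_span_closed[OF \<beta> S h])
    fix e :: real assume "e > 0"
    obtain N where N: "(\<Sum>\<^sub>\<infinity>n. if n < N then 0 else ?\<beta> n * (cmod (h n))\<^sup>2) < e\<^sup>2"
      using infsum_tail_small[of "\<lambda>n. ?\<beta> n * (cmod (h n))\<^sup>2" "e\<^sup>2"] h \<beta> \<open>e > 0\<close>
      by (auto simp: wl2_def)
    define hN where "hN n = (\<Sum>i<N. (h i * complex_of_real (?\<beta> i)) * coeff_vec \<alpha> i n)" for n
    have hN: "hN \<in> closed_span ?\<beta> ?S"
      unfolding hN_def[abs_def] using coeff_vec_in_closed_span[OF assms] by (rule closed_span_sum[OF \<beta> S])
    have "(h i * complex_of_real (?\<beta> i)) * coeff_vec \<alpha> i n = (if i = n then h n else 0)" for i n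
      by (simp add: coeff_vec_def less_imp_neq[OF dir_weight_pos, symmetric])
    then have "hN n = (if n < N then h n else 0)" for n
      by (simp add: hN_def)
    then have "wnorm ?\<beta> (\<lambda>n. h n - hN n) = sqrt (\<Sum>\<^sub>\<infinity>n. if n < N then 0 else ?\<beta> n * (cmod (h n))\<^sup>2)"
      unfolding wnorm_def by (auto intro!: arg_cong[where f = sqrt] infsum_cong)
    also have "\<dots> < e"
      using real_sqrt_less_mono[OF N] \<open>e > 0\<close> by simp
    finally show "\<exists>y\<in>closed_span ?\<beta> ?S. wnorm ?\<beta> (\<lambda>n. h n - y n) < e"
      using hN by blast
  qed
  then show "h \<in> bundle_span ?\<beta> (eig_bundle ?\<beta> (Dstar \<alpha>))"
    by (simp add: bundle_span_def)
qed (rule bundle_span_subset_wl2[THEN subsetD])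

lemma tens_wl2:
  assumes \<beta>1: "\<And>i. 0 \<le> \<beta>1 i" and \<beta>2: "\<And>j. 0 \<le> \<beta>2 j"
    and x: "x \<in> wl2 \<beta>1" and y: "y \<in> wl2 \<beta>2"
  shows "tens x y \<in> wl2 (tensor_weight \<beta>1 \<beta>2)"
proof -
  define a where "a i = \<beta>1 i * (cmod (x i))\<^sup>2" for i
  define c where "c j = \<beta>2 j * (cmod (y j))\<^sup>2" for j
  have a: "a summable_on UNIV" and c: "c summable_on UNIV"
    using x y by (simp_all add: wl2_def a_def[abs_def] c_def[abs_def])
  have "(\<lambda>(i, j). a i * c j) summable_on Sigma UNIV (\<lambda>_. UNIV)"
  proof (rule summable_on_SigmaI)
    show "((\<lambda>j. (\<lambda>(i, j). a i * c j) (i, j)) has_sum a i * infsum c UNIV) UNIV" for i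
      using has_sum_cmult_right[OF has_sum_infsum[OF c]] by simp
    show "(\<lambda>i. a i * infsum c UNIV) summable_on UNIV"
      using a by (rule summable_on_cmult_left)
    show "0 \<le> (\<lambda>(i, j). a i * c j) (i, j)" for i j
      using \<beta>1[of i] \<beta>2[of j] by (simp add: a_def c_def)
  qed
  moreover have "(\<lambda>(i, j). a i * c j) = (\<lambda>ij. tensor_weight \<beta>1 \<beta>2 ij * (cmod (tens x y ij))\<^sup>2)"
    by (auto simp: a_def c_def tensor_weight_def tens_def norm_mult power_mult_distrib fun_eq_iff)
  ultimately show ?thesis
    by (simp add: wl2_def)
qed

lemma tensor_bundle_subset_wl2:
  assumes \<beta>1: "\<And>i. 0 \<le> \<beta>1 i" and \<beta>2: "\<And>j. 0 \<le> \<beta>2 j"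
    and "E w \<subseteq> wl2 \<beta>1" and "F w \<subseteq> wl2 \<beta>2"
  shows "tensor_bundle E F w \<subseteq> wl2 (tensor_weight \<beta>1 \<beta>2)"
  unfolding tensor_bundle_def
proof (rule cspan_subset_wl2)
  show "0 \<le> tensor_weight \<beta>1 \<beta>2 ij" for ij
    using \<beta>1 \<beta>2 by (cases ij) (simp add: tensor_weight_def)
  show "{tens x y |x y. x \<in> E w \<and> y \<in> F w} \<subseteq> wl2 (tensor_weight \<beta>1 \<beta>2)"
    using assms(3,4) by (auto intro: tens_wl2[OF \<beta>1 \<beta>2])
qed

lemma line_bundle_of_subset_wl2:
  assumes "hol_frame \<beta> \<gamma>" and "\<And>i. 0 \<le> \<beta> i" and "w \<in> ball 0 1"
  shows "line_bundle_of \<gamma> w \<subseteq> wl2 \<beta>"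
  unfolding line_bundle_of_def
  using assms by (intro cspan_subset_wl2) (auto simp: hol_frame_def)

theorem proposition4p6:
  fixes \<alpha> :: real
    and T :: "('a::countable \<Rightarrow> complex) \<Rightarrow> ('a \<Rightarrow> complex)"
    and \<gamma> :: "complex \<Rightarrow> ('b::countable \<Rightarrow> complex)"
  assumes "0 < \<alpha>" and "\<alpha> \<le> 1"
    and "cowen_douglas_1 (ones :: 'a \<Rightarrow> real) T"
    and "hol_frame (ones :: 'b \<Rightarrow> real) \<gamma>"
    and "bundle_unitary_equiv (ones :: 'a \<Rightarrow> real) (eig_bundle ones T)
           (tensor_weight (dir_weight \<alpha>) (ones :: 'b \<Rightarrow> real))
           (tensor_bundle (eig_bundle (dir_weight \<alpha>) (Dstar \<alpha>)) (line_bundle_of \<gamma>))"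
  shows "op_similar (ones :: 'a \<Rightarrow> real) T (dir_weight \<alpha>) (Dstar \<alpha>) \<longleftrightarrow>
         bundle_similar (tensor_weight (dir_weight \<alpha>) (ones :: 'b \<Rightarrow> real))
           (tensor_bundle (eig_bundle (dir_weight \<alpha>) (Dstar \<alpha>)) (line_bundle_of \<gamma>))
           (dir_weight \<alpha>) (eig_bundle (dir_weight \<alpha>) (Dstar \<alpha>))"
proof -
  let ?E = "eig_bundle (dir_weight \<alpha>) (Dstar \<alpha>)"
  let ?F = "tensor_bundle ?E (line_bundle_of \<gamma>)"
  let ?\<beta>F = "tensor_weight (dir_weight \<alpha>) (ones :: 'b \<Rightarrow> real)"
  have "0 \<le> \<alpha>"
    using assms(1) by simp
  have \<beta>: "\<And>n. 0 \<le> dir_weight \<alpha> n"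
    using dir_weight_pos less_imp_le by blast
  have \<beta>F: "\<And>ij. 0 \<le> ?\<beta>F ij"
    using \<beta> by (auto simp: tensor_weight_def ones_def)
  have ones_a: "\<And>i. 0 \<le> (ones :: 'a \<Rightarrow> real) i" and ones_b: "\<And>j. 0 \<le> (ones :: 'b \<Rightarrow> real) j"
    by (simp_all add: ones_def)
  have F: "?F w \<subseteq> wl2 ?\<beta>F" if "w \<in> ball 0 1" for w
  proof (rule tensor_bundle_subset_wl2)
    show "?E w \<subseteq> wl2 (dir_weight \<alpha>)"
      by (auto simp: eig_bundle_def)
    show "line_bundle_of \<gamma> w \<subseteq> wl2 ones"
      using assms(4) ones_b that by (rule line_bundle_of_subset_wl2)
  qed (simp_all add: \<beta> ones_def)
  have T: "bounded_operator ones T" and span_T: "bundle_span ones (eig_bundle ones T) = wl2 ones"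
    using assms(3) unfolding cowen_douglas_1_def by blast+
  have "op_similar ones T (dir_weight \<alpha>) (Dstar \<alpha>)
      \<longleftrightarrow> bundle_similar ones (eig_bundle ones T) (dir_weight \<alpha>) ?E"
    by (rule op_similar_iff_eig_bundle_similar[OF _ _ T Dstar_bounded[OF \<open>0 \<le> \<alpha>\<close>] span_T
          Dstar_eigvecs_span[OF \<open>0 \<le> \<alpha>\<close>]]) (simp_all add: ones_def dir_weight_pos)
  also have "\<dots> \<longleftrightarrow> bundle_similar ?\<beta>F ?F (dir_weight \<alpha>) ?E"
    using assms(5) ones_a \<beta>F \<beta> F by (rule unitary_equiv_bundle_similar_iff)
  finally show ?thesis .
qed

end
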